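(* Fix integers $n\ge 2$, $k\ge 1$, a horizon $T$, and a subpopulation distribution $\mathbf p=(p_1,\dots,p_k)$ with all $p_j>0$ and $\sum_j p_j=1$, known to the agent. For every policy $\pi$ (with arbitrary, possibly history-dependent, subpopulation and treatment selection rules), $$\mathrm{SR}(\pi,T,\mathbf p)\in\Omega\Big(\sqrt{\tfrac{n}{T}}\,\|\mathbf p\|_{2/3}\Big),$$ where $\|\mathbf p\|_{2/3}=\big(\sum_{j=1}^k p_j^{2/3}\big)^{3/2}$.
   Context: Bandit with subpopulations: there are $n$ treatments and $k$ subpopulations (contexts). For each pair $(i,j)\in[n]\times[k]$ there is a reward distribution $\nu_{i,j}$ supported on $[0,1]$ with mean $\mu_{i,j}$; $\boldsymbol\nu=(\nu_{i,j})$. The subpopulation distribution is $\mathbf p$ with $\Pr(C=j)=p_j>0$. For $T$ rounds: (1) a subpopulation $C_t$ is either drawn from $\mathbf p$ and revealed (passive round) or chosen by the agent based on the history $(A_s,C_s,Y_s)_{s<t}$ and $\mathbf p$ (active round); (2) the agent picks treatment $A_t\in[n]$ based on the history and $C_t$; (3) the agent observes $Y_t\sim\nu_{A_t,C_t}$ independently. After $T$ rounds the agent outputs for each $j$ a recommended treatment $\hat a_j$. A policy $\pi$ consists of all these sampling decisions and the recommendation rule. The simple regret on instance $(\boldsymbol\nu,\mathbf p)$ is $\mathrm{SR}(\pi,T,(\boldsymbol\nu,\mathbf p))=\sum_j p_j\,\mathbb E[\mu_{a_j^*,j}-\mu_{\hat a_j,j}]$ with $a_j^*\in\arg\max_i\mu_{i,j}$,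 and the worst-case simple regret is $\mathrm{SR}(\pi,T,\mathbf p)=\sup_{\boldsymbol\nu}\mathrm{SR}(\pi,T,(\boldsymbol\nu,\mathbf p))$, the supremum over all reward distribution matrices supported on $[0,1]$. The paper works in the data-rich regime $T\gg n,k,1/\min_j p_j$. Asymptotic notation hides universal constants. *)

theory Defs
  imports "HOL-Probability.Probability"
begin

text \<open>Treatments are 0..<n, subpopulations 0..<k. A history is the list of
  observed triples (A_s, C_s, Y_s).\<close>

type_synonym hist = "(nat \<times> nat \<times> real) list"

text \<open>A (randomized, history-dependent) policy: a subpopulation selection rule
  (a passive round corresponds to the rule returning the distribution p),
  a treatment selection rule, and a recommendation rule.\<close>

record policy =
  ctx_rule :: "hist \<Rightarrow> nat pmf"
  arm_rule :: "hist \<Rightarrow> nat \<Rightarrow> nat pmf"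
  rec_rule :: "hist \<Rightarrow> nat \<Rightarrow> nat pmf"

definition valid_policy :: "nat \<Rightarrow> nat \<Rightarrow> policy \<Rightarrow> bool" where
  "valid_policy n k \<pi> \<longleftrightarrow>
     (\<forall>h. set_pmf (ctx_rule \<pi> h) \<subseteq> {..<k}) \<and>
     (\<forall>h c. set_pmf (arm_rule \<pi> h c) \<subseteq> {..<n}) \<and>
     (\<forall>h j. set_pmf (rec_rule \<pi> h j) \<subseteq> {..<n})"

text \<open>Reward distribution matrix: nu i j is the reward distribution of treatment i
  in subpopulation j, supported on [0,1].\<close>

definition valid_instance :: "(nat \<Rightarrow> nat \<Rightarrow> real pmf) \<Rightarrow> bool" where
  "valid_instance \<nu> \<longleftrightarrow> (\<forall>i j. set_pmf (\<nu> i j) \<subseteq> {0..1})"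

definition mean_reward :: "(nat \<Rightarrow> nat \<Rightarrow> real pmf) \<Rightarrow> nat \<Rightarrow> nat \<Rightarrow> real" where
  "mean_reward \<nu> i j = measure_pmf.expectation (\<nu> i j) (\<lambda>y. y)"

fun history :: "policy \<Rightarrow> (nat \<Rightarrow> nat \<Rightarrow> real pmf) \<Rightarrow> nat \<Rightarrow> hist pmf" where
  "history \<pi> \<nu> 0 = return_pmf []"
| "history \<pi> \<nu> (Suc t) =
     bind_pmf (history \<pi> \<nu> t) (\<lambda>h.
       bind_pmf (ctx_rule \<pi> h) (\<lambda>c.
         bind_pmf (arm_rule \<pi> h c) (\<lambda>a.
           map_pmf (\<lambda>y. h @ [(a, c, y)]) (\<nu> a c))))"

definition best_mean :: "nat \<Rightarrow> (nat \<Rightarrow> nat \<Rightarrow> real pmf) \<Rightarrow> nat \<Rightarrow> real" where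
  "best_mean n \<nu> j = Max ((\<lambda>i. mean_reward \<nu> i j) ` {..<n})"

definition simple_regret ::
  "nat \<Rightarrow> nat \<Rightarrow> policy \<Rightarrow> nat \<Rightarrow> (nat \<Rightarrow> nat \<Rightarrow> real pmf) \<Rightarrow> (nat \<Rightarrow> real) \<Rightarrow> real" where
  "simple_regret n k \<pi> T \<nu> p =
     (\<Sum>j<k. p j * measure_pmf.expectation
                     (bind_pmf (history \<pi> \<nu> T) (\<lambda>h. rec_rule \<pi> h j))
                     (\<lambda>a. best_mean n \<nu> j - mean_reward \<nu> a j))"

definition worst_simple_regret ::
  "nat \<Rightarrow> nat \<Rightarrow> policy \<Rightarrow> nat \<Rightarrow> (nat \<Rightarrow> real) \<Rightarrow> real" where
  "worst_simple_regret n k \<pi> T p =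
     (SUP \<nu> \<in> {\<nu>. valid_instance \<nu>}. simple_regret n k \<pi> T \<nu> p)"

definition norm_two_thirds :: "nat \<Rightarrow> (nat \<Rightarrow> real) \<Rightarrow> real" where
  "norm_two_thirds k p = (\<Sum>j<k. p j powr (2/3)) powr (3/2)"

end

theory Submission
  imports Defs
begin

text \<open>Consider the instances in which, in each subpopulation \<open>j\<close>, one treatment
  \<open>\<sigma> j\<close> is a coin of bias \<open>1/2 + \<Delta>\<^sub>j\<close> and all others are fair. Setting \<open>\<Delta>\<^sub>j\<close> to \<open>0\<close>
  gives a null instance whose history does not depend on \<open>\<sigma> j\<close>. Truncating subpopulation \<open>j\<close>
  after \<open>m\<^sub>j\<close> samples, the likelihood ratio against the null instance has log-expectation
  \<open>-KL\<close> times the number of early pulls of \<open>\<sigma> j\<close>, so the probability of recommending \<open>\<sigma> j\<close>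
  exceeds its null value by at most \<open>1/16 + 17 KL E[early pulls] + E[samples of j] / m\<^sub>j\<close>.
  Averaged over \<open>\<sigma> j\<close>, the null recommendation probabilities sum to at most \<open>1\<close> and the early
  pulls to at most \<open>m\<^sub>j + 1\<close>, so some \<open>\<sigma>\<close> has regret at least \<open>3/8 \<Sum> p\<^sub>j \<Delta>\<^sub>j\<close> minus the
  sampling penalty. Taking \<open>\<Delta>\<^sub>j\<close> proportional to \<open>p\<^sub>j\<^bsup>-1/3\<^esup>\<close> and \<open>m\<^sub>j\<close> to \<open>T p\<^sub>j\<^bsup>2/3\<^esup>\<close>
  balances the terms and yields \<open>\<surd>(n/T) (\<Sum> p\<^sub>j\<^bsup>2/3\<^esup>)\<^bsup>3/2\<^esup>\<close>.\<close>

section \<open>Histories under history-dependent reward kernels\<close>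

type_synonym reward_kernel = "hist \<Rightarrow> nat \<Rightarrow> nat \<Rightarrow> real pmf"

fun adaptive_history :: "policy \<Rightarrow> reward_kernel \<Rightarrow> nat \<Rightarrow> hist pmf" where
  "adaptive_history \<pi> R 0 = return_pmf []"
| "adaptive_history \<pi> R (Suc t) =
     bind_pmf (adaptive_history \<pi> R t) (\<lambda>h.
       bind_pmf (ctx_rule \<pi> h) (\<lambda>c.
         bind_pmf (arm_rule \<pi> h c) (\<lambda>a.
           map_pmf (\<lambda>y. h @ [(a, c, y)]) (R h a c))))"

lemma history_eq_adaptive_history: "history \<pi> \<nu> t = adaptive_history \<pi> (\<lambda>h a c. \<nu> a c) t"
  by (induction t) auto

lemma length_adaptive_history: "h \<in> set_pmf (adaptive_history \<pi> R t) \<Longrightarrow> length h = t"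
  by (induction t arbitrary: h) auto

lemma integrable_adaptive_history:
  fixes f :: "hist \<Rightarrow> real"
  assumes "\<And>h. length h = t \<Longrightarrow> \<bar>f h\<bar> \<le> B"
  shows "integrable (adaptive_history \<pi> R t) f"
  by (rule measure_pmf.integrable_const_bound[where B=B])
    (auto intro!: AE_pmfI simp: assms length_adaptive_history)

lemma nn_integral_adaptive_history_eq_integral:
  assumes "\<And>h. 0 \<le> f h" "\<And>h. length h = t \<Longrightarrow> f h \<le> B"
  shows "(\<integral>\<^sup>+h. ennreal (f h) \<partial>adaptive_history \<pi> R t) = ennreal (\<integral>h. f h \<partial>adaptive_history \<pi> R t)"
proof -
  have "integrable (adaptive_history \<pi> R t) f"
    using assms by (intro integrable_adaptive_history[where B=B]) auto
  then show ?thesis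
    using assms(1) by (intro nn_integral_eq_integral) auto
qed

type_synonym step_fun = "hist \<Rightarrow> nat \<Rightarrow> nat \<Rightarrow> real \<Rightarrow> real"

definition path_prod :: "step_fun \<Rightarrow> hist \<Rightarrow> real" where
  "path_prod r h = (\<Prod>s<length h. r (take s h) (fst (h!s)) (fst (snd (h!s))) (snd (snd (h!s))))"

definition path_sum :: "step_fun \<Rightarrow> hist \<Rightarrow> real" where
  "path_sum r h = (\<Sum>s<length h. r (take s h) (fst (h!s)) (fst (snd (h!s))) (snd (snd (h!s))))"

lemma path_prod_Nil [simp]: "path_prod r [] = 1"
  by (simp add: path_prod_def)

lemma path_sum_Nil [simp]: "path_sum r [] = 0"
  by (simp add: path_sum_def)

lemma path_prod_snoc [simp]: "path_prod r (h @ [(a, c, y)]) = path_prod r h * r h a c y"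
  unfolding path_prod_def by (auto simp: prod.lessThan_Suc nth_append intro!: prod.cong)

lemma path_sum_snoc [simp]: "path_sum r (h @ [(a, c, y)]) = path_sum r h + r h a c y"
  unfolding path_sum_def by (auto simp: sum.lessThan_Suc nth_append intro!: sum.cong)

lemma path_prod_nonneg: "(\<And>h a c y. 0 \<le> r h a c y) \<Longrightarrow> 0 \<le> path_prod r h"
  by (simp add: path_prod_def prod_nonneg)

lemma path_prod_pos: "(\<And>h a c y. 0 < r h a c y) \<Longrightarrow> 0 < path_prod r h"
  by (simp add: path_prod_def prod_pos)

lemma path_prod_le_power:
  assumes "\<And>h a c y. 0 \<le> r h a c y" "\<And>h a c y. r h a c y \<le> B" "1 \<le> B"
  shows "path_prod r h \<le> B ^ length h"
  unfolding path_prod_def by (rule prod_le_power) (use assms in auto)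

lemma ln_path_prod:
  "(\<And>h a c y. 0 < r h a c y) \<Longrightarrow> ln (path_prod r h) = path_sum (\<lambda>h a c y. ln (r h a c y)) h"
  unfolding path_prod_def path_sum_def by (subst ln_prod) (auto simp: less_imp_neq[symmetric])

lemma path_sum_nonneg: "(\<And>h a c y. 0 \<le> r h a c y) \<Longrightarrow> 0 \<le> path_sum r h"
  by (simp add: path_sum_def sum_nonneg)

lemma path_sum_le:
  assumes "\<And>h a c y. r h a c y \<le> B"
  shows "path_sum r h \<le> real (length h) * B"
  unfolding path_sum_def using sum_bounded_above[of "{..<length h}", OF assms] by simp

lemma abs_path_sum_le:
  assumes "\<And>h a c y. \<bar>r h a c y\<bar> \<le> B"
  shows "\<bar>path_sum r h\<bar> \<le> real (length h) * B"
proof -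
  have "\<bar>path_sum r h\<bar> \<le> path_sum (\<lambda>h a c y. \<bar>r h a c y\<bar>) h"
    unfolding path_sum_def by (rule sum_abs)
  also have "\<dots> \<le> real (length h) * B"
    by (rule path_sum_le) (rule assms)
  finally show ?thesis .
qed

lemma path_sum_diff: "path_sum (\<lambda>h a c y. r1 h a c y - r2 h a c y) h = path_sum r1 h - path_sum r2 h"
  unfolding path_sum_def by (simp add: sum_subtractf)

lemma path_sum_cmult: "path_sum (\<lambda>h a c y. x * r h a c y) h = x * path_sum r h"
  unfolding path_sum_def by (simp add: sum_distrib_left)

lemma path_sum_cong: "(\<And>h a c y. r1 h a c y = r2 h a c y) \<Longrightarrow> path_sum r1 h = path_sum r2 h"
  unfolding path_sum_def by simp

subsection \<open>Coupling, change of measure and compensators\<close>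

lemma nn_integral_adaptive_history_coupling:
  fixes bad :: "hist \<Rightarrow> bool" and R1 R2 :: reward_kernel
  assumes mono: "\<And>h x. bad h \<Longrightarrow> bad (h @ [x])"
    and differ: "\<And>h a c y. R1 h a c \<noteq> R2 h a c \<Longrightarrow> bad (h @ [(a, c, y)])"
  shows "(\<integral>\<^sup>+h. (if bad h then 0 else f h) \<partial>adaptive_history \<pi> R1 t) =
         (\<integral>\<^sup>+h. (if bad h then 0 else f h) \<partial>adaptive_history \<pi> R2 t)"
proof (induction t arbitrary: f)
  case 0
  then show ?case by simp
next
  case (Suc t)
  define I where "I = (\<lambda>R h. \<integral>\<^sup>+c. \<integral>\<^sup>+a. \<integral>\<^sup>+y.
      (if bad (h @ [(a, c, y)]) then 0 else f (h @ [(a, c, y)])) \<partial>R h a c \<partial>arm_rule \<pi> h c \<partial>ctx_rule \<pi> h)"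
  have I_R1: "I R1 h = (if bad h then 0 else I R2 h)" for h
  proof (cases "bad h")
    case False
    have "(\<integral>\<^sup>+y. (if bad (h @ [(a, c, y)]) then 0 else f (h @ [(a, c, y)])) \<partial>R1 h a c) =
          (\<integral>\<^sup>+y. (if bad (h @ [(a, c, y)]) then 0 else f (h @ [(a, c, y)])) \<partial>R2 h a c)" for a c
      using differ[of h a c] by (cases "R1 h a c = R2 h a c") auto
    then show ?thesis using False by (simp add: I_def)
  qed (simp add: I_def mono)
  have I_R2: "I R2 h = (if bad h then 0 else I R2 h)" for h
    by (cases "bad h") (auto simp add: I_def mono)
  have "(\<integral>\<^sup>+h. (if bad h then 0 else f h) \<partial>adaptive_history \<pi> R1 (Suc t)) =
      (\<integral>\<^sup>+h. I R1 h \<partial>adaptive_history \<pi> R1 t)"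
    by (simp add: I_def)
  also have "\<dots> = (\<integral>\<^sup>+h. (if bad h then 0 else I R2 h) \<partial>adaptive_history \<pi> R1 t)"
    by (simp add: I_R1)
  also have "\<dots> = (\<integral>\<^sup>+h. (if bad h then 0 else I R2 h) \<partial>adaptive_history \<pi> R2 t)"
    by (rule Suc)
  also have "\<dots> = (\<integral>\<^sup>+h. I R2 h \<partial>adaptive_history \<pi> R2 t)"
    using I_R2 by metis
  also have "\<dots> = (\<integral>\<^sup>+h. (if bad h then 0 else f h) \<partial>adaptive_history \<pi> R2 (Suc t))"
    by (simp add: I_def)
  finally show ?case .
qed

lemma integral_adaptive_history_coupling_le:
  fixes bad :: "hist \<Rightarrow> bool" and R1 R2 :: reward_kernel and f :: "hist \<Rightarrow> real"
  assumes mono: "\<And>h x. bad h \<Longrightarrow> bad (h @ [x])"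
    and differ: "\<And>h a c y. R1 h a c \<noteq> R2 h a c \<Longrightarrow> bad (h @ [(a, c, y)])"
    and f_range: "\<And>h. 0 \<le> f h" "\<And>h. f h \<le> 1"
  shows "(\<integral>h. f h \<partial>adaptive_history \<pi> R1 t) \<le>
    (\<integral>h. f h \<partial>adaptive_history \<pi> R2 t) + (\<integral>h. (if bad h then 1 else 0) \<partial>adaptive_history \<pi> R1 t)"
proof -
  let ?P1 = "adaptive_history \<pi> R1 t" and ?P2 = "adaptive_history \<pi> R2 t"
  let ?good = "\<lambda>h. if bad h then 0 else f h" and ?bad = "\<lambda>h. if bad h then f h else 0"
  have "(\<integral>\<^sup>+h. ennreal (?good h) \<partial>?P1) = (\<integral>\<^sup>+h. ennreal (?good h) \<partial>?P2)"
    using nn_integral_adaptive_history_coupling[of bad R1 R2, OF mono differ, where f="\<lambda>h. ennreal (f h)"]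
    by (simp add: if_distrib cong: if_cong)
  then have "ennreal (\<integral>h. ?good h \<partial>?P1) = ennreal (\<integral>h. ?good h \<partial>?P2)"
    by (subst (asm) (1 2) nn_integral_adaptive_history_eq_integral[where B=1]) (auto simp: f_range)
  then have good_eq: "(\<integral>h. ?good h \<partial>?P1) = (\<integral>h. ?good h \<partial>?P2)"
    by (subst (asm) ennreal_inj) (auto intro!: integral_nonneg_AE simp: f_range)
  have int: "integrable ?P1 ?good" "integrable ?P1 ?bad"
     "integrable ?P1 (\<lambda>h. if bad h then 1 else 0 :: real)"
     "integrable ?P2 ?good" "integrable ?P2 f"
    by (auto intro!: integrable_adaptive_history[where B=1] simp: f_range abs_le_iff)
  have "(\<integral>h. f h \<partial>?P1) = (\<integral>h. ?good h + ?bad h \<partial>?P1)"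
    by (intro Bochner_Integration.integral_cong) auto
  also have "\<dots> = (\<integral>h. ?good h \<partial>?P1) + (\<integral>h. ?bad h \<partial>?P1)"
    by (intro Bochner_Integration.integral_add int)
  also have "(\<integral>h. ?bad h \<partial>?P1) \<le> (\<integral>h. (if bad h then 1 else 0) \<partial>?P1)"
    using int by (intro integral_mono) (auto simp: f_range)
  also have "(\<integral>h. ?good h \<partial>?P1) \<le> (\<integral>h. f h \<partial>?P2)"
    unfolding good_eq using int by (intro integral_mono) (auto simp: f_range)
  finally show ?thesis by simp
qed

lemma nn_integral_adaptive_history_density:
  fixes R1 R2 :: reward_kernel
  assumes density: "\<And>h a c g. (\<integral>\<^sup>+y. g y \<partial>R2 h a c) = (\<integral>\<^sup>+y. ennreal (r h a c y) * g y \<partial>R1 h a c)"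
    and r_nonneg: "\<And>h a c y. 0 \<le> r h a c y"
  shows "(\<integral>\<^sup>+h. f h \<partial>adaptive_history \<pi> R2 t) =
    (\<integral>\<^sup>+h. ennreal (path_prod r h) * f h \<partial>adaptive_history \<pi> R1 t)"
proof (induction t arbitrary: f)
  case 0
  then show ?case by simp
next
  case (Suc t)
  define F where "F = (\<lambda>h. \<integral>\<^sup>+c. \<integral>\<^sup>+a. \<integral>\<^sup>+y. f (h @ [(a, c, y)])
      \<partial>R2 h a c \<partial>arm_rule \<pi> h c \<partial>ctx_rule \<pi> h)"
  have "(\<integral>\<^sup>+h. f h \<partial>adaptive_history \<pi> R2 (Suc t)) = (\<integral>\<^sup>+h. F h \<partial>adaptive_history \<pi> R2 t)"
    by (simp add: F_def)
  also have "\<dots> = (\<integral>\<^sup>+h. ennreal (path_prod r h) * F h \<partial>adaptive_history \<pi> R1 t)"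
    by (rule Suc)
  also have "\<dots> = (\<integral>\<^sup>+h. \<integral>\<^sup>+c. \<integral>\<^sup>+a. \<integral>\<^sup>+y.
      ennreal (path_prod r (h @ [(a, c, y)])) * f (h @ [(a, c, y)])
      \<partial>R1 h a c \<partial>arm_rule \<pi> h c \<partial>ctx_rule \<pi> h \<partial>adaptive_history \<pi> R1 t)"
    unfolding F_def density
    by (simp add: nn_integral_cmult[symmetric] ennreal_mult' path_prod_nonneg r_nonneg mult.assoc)
  also have "\<dots> = (\<integral>\<^sup>+h. ennreal (path_prod r h) * f h \<partial>adaptive_history \<pi> R1 (Suc t))"
    by simp
  finally show ?case .
qed

lemma integral_adaptive_history_density:
  fixes R1 R2 :: reward_kernel and f :: "hist \<Rightarrow> real"
  assumes density: "\<And>h a c g. (\<integral>\<^sup>+y. g y \<partial>R2 h a c) = (\<integral>\<^sup>+y. ennreal (r h a c y) * g y \<partial>R1 h a c)"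
    and r_range: "\<And>h a c y. 0 \<le> r h a c y" "\<And>h a c y. r h a c y \<le> B"
    and f_range: "\<And>h. 0 \<le> f h" "\<And>h. f h \<le> 1"
  shows "(\<integral>h. f h \<partial>adaptive_history \<pi> R2 t) = (\<integral>h. path_prod r h * f h \<partial>adaptive_history \<pi> R1 t)"
proof -
  have B: "1 \<le> max 1 B" "\<And>h a c y. r h a c y \<le> max 1 B"
    using r_range(2) by (auto intro: le_max_iff_disj[THEN iffD2])
  have "ennreal (\<integral>h. f h \<partial>adaptive_history \<pi> R2 t) = (\<integral>\<^sup>+h. ennreal (f h) \<partial>adaptive_history \<pi> R2 t)"
    by (rule nn_integral_adaptive_history_eq_integral[where B=1, symmetric]) (auto simp: f_range)
  also have "\<dots> = (\<integral>\<^sup>+h. ennreal (path_prod r h * f h) \<partial>adaptive_history \<pi> R1 t)"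
    by (subst nn_integral_adaptive_history_density[OF density r_range(1)])
      (simp add: ennreal_mult path_prod_nonneg r_range f_range)
  also have "\<dots> = ennreal (\<integral>h. path_prod r h * f h \<partial>adaptive_history \<pi> R1 t)"
  proof (rule nn_integral_adaptive_history_eq_integral[where B="max 1 B ^ t"])
    fix h :: hist
    assume "length h = t"
    moreover have "path_prod r h \<le> max 1 B ^ length h"
      by (rule path_prod_le_power) (use r_range B in auto)
    ultimately have "path_prod r h \<le> max 1 B ^ t"
      by simp
    then show "path_prod r h * f h \<le> max 1 B ^ t"
      using path_prod_nonneg[where h=h, OF r_range(1)] f_range[of h] by (meson mult_left_le order_trans)
  qed (simp add: path_prod_nonneg r_range f_range)
  finally show ?thesis
    by (subst (asm) ennreal_inj) (auto intro!: integral_nonneg_AE simp: f_range path_prod_nonneg r_range)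
qed

lemma nn_integral_path_sum_compensator:
  fixes R :: reward_kernel
  assumes cond_mean: "\<And>h a c. (\<integral>\<^sup>+y. ennreal (g h a c y) \<partial>R h a c) = ennreal (\<mu> h a c)"
    and nonneg: "\<And>h a c y. 0 \<le> g h a c y" "\<And>h a c. 0 \<le> \<mu> h a c"
  shows "(\<integral>\<^sup>+h. ennreal (path_sum g h) \<partial>adaptive_history \<pi> R t) =
         (\<integral>\<^sup>+h. ennreal (path_sum (\<lambda>h a c y. \<mu> h a c) h) \<partial>adaptive_history \<pi> R t)"
proof (induction t)
  case 0
  then show ?case by simp
next
  case (Suc t)
  let ?H = "adaptive_history \<pi> R t"
  have add_const: "(\<integral>\<^sup>+c. \<integral>\<^sup>+a. \<integral>\<^sup>+y. (K + G c a y) \<partial>R h a c \<partial>arm_rule \<pi> h c \<partial>ctx_rule \<pi> h) =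
     K + (\<integral>\<^sup>+c. \<integral>\<^sup>+a. \<integral>\<^sup>+y. G c a y \<partial>R h a c \<partial>arm_rule \<pi> h c \<partial>ctx_rule \<pi> h)" for K G h
    by (simp add: nn_integral_add measure_pmf.emeasure_space_1)
  define X where "X = (\<lambda>h. \<integral>\<^sup>+c. \<integral>\<^sup>+a. ennreal (\<mu> h a c) \<partial>arm_rule \<pi> h c \<partial>ctx_rule \<pi> h)"
  have "(\<integral>\<^sup>+h. ennreal (path_sum g h) \<partial>adaptive_history \<pi> R (Suc t)) =
     (\<integral>\<^sup>+h. \<integral>\<^sup>+c. \<integral>\<^sup>+a. \<integral>\<^sup>+y. (ennreal (path_sum g h) + ennreal (g h a c y))
      \<partial>R h a c \<partial>arm_rule \<pi> h c \<partial>ctx_rule \<pi> h \<partial>?H)"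
    by (simp add: ennreal_plus path_sum_nonneg nonneg)
  also have "\<dots> = (\<integral>\<^sup>+h. ennreal (path_sum g h) + X h \<partial>?H)"
    by (simp only: add_const X_def cond_mean)
  also have "\<dots> = (\<integral>\<^sup>+h. ennreal (path_sum (\<lambda>h a c y. \<mu> h a c) h) + X h \<partial>?H)"
    using Suc by (simp add: nn_integral_add)
  also have "\<dots> = (\<integral>\<^sup>+h. \<integral>\<^sup>+c. \<integral>\<^sup>+a. \<integral>\<^sup>+y.
      (ennreal (path_sum (\<lambda>h a c y. \<mu> h a c) h) + ennreal (\<mu> h a c))
      \<partial>R h a c \<partial>arm_rule \<pi> h c \<partial>ctx_rule \<pi> h \<partial>?H)"
    by (simp only: add_const X_def) (simp add: measure_pmf.emeasure_space_1)
  also have "\<dots> = (\<integral>\<^sup>+h. ennreal (path_sum (\<lambda>h a c y. \<mu> h a c) h) \<partial>adaptive_history \<pi> R (Suc t))"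
    by (simp add: ennreal_plus path_sum_nonneg nonneg)
  finally show ?case .
qed

lemma integral_path_sum_compensator:
  fixes R :: reward_kernel
  assumes cond_mean: "\<And>h a c. (\<integral>\<^sup>+y. ennreal (g h a c y) \<partial>R h a c) = ennreal (\<mu> h a c)"
    and nonneg: "\<And>h a c y. 0 \<le> g h a c y" "\<And>h a c. 0 \<le> \<mu> h a c"
    and bounded: "\<And>h a c y. g h a c y \<le> B" "\<And>h a c. \<mu> h a c \<le> B"
  shows "(\<integral>h. path_sum g h \<partial>adaptive_history \<pi> R t) =
    (\<integral>h. path_sum (\<lambda>h a c y. \<mu> h a c) h \<partial>adaptive_history \<pi> R t)"
proof -
  have "ennreal (\<integral>h. path_sum g h \<partial>adaptive_history \<pi> R t) =
      (\<integral>\<^sup>+h. ennreal (path_sum g h) \<partial>adaptive_history \<pi> R t)"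
    by (rule nn_integral_adaptive_history_eq_integral[where B="real t * B", symmetric])
      (use path_sum_nonneg nonneg path_sum_le[OF bounded(1)] in auto)
  also have "\<dots> = (\<integral>\<^sup>+h. ennreal (path_sum (\<lambda>h a c y. \<mu> h a c) h) \<partial>adaptive_history \<pi> R t)"
    by (rule nn_integral_path_sum_compensator[OF cond_mean nonneg])
  also have "\<dots> = ennreal (\<integral>h. path_sum (\<lambda>h a c y. \<mu> h a c) h \<partial>adaptive_history \<pi> R t)"
    by (rule nn_integral_adaptive_history_eq_integral[where B="real t * B"])
      (use path_sum_nonneg nonneg path_sum_le[of "\<lambda>h a c y. \<mu> h a c", OF bounded(2)] in auto)
  finally show ?thesis
    by (subst (asm) ennreal_inj) (auto intro!: integral_nonneg_AE path_sum_nonneg nonneg)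
qed

section \<open>Elementary inequalities\<close>

lemma ln_le_tangent:
  fixes a x :: real
  assumes "0 < a" "0 < x"
  shows "ln x \<le> ln a + x / a - 1"
  using ln_le_minus_one[of "x / a"] ln_divide_pos[of x a] assms by simp

text \<open>A substitute for Pinsker's inequality: it bounds the total variation of a likelihood
  ratio \<open>L\<close> by the KL-type quantity \<open>E[L - 1 - ln L]\<close>, up to a small additive error.\<close>

lemma abs_sub_one_le_ln_gap:
  fixes x :: real
  assumes "0 < x"
  shows "\<bar>x - 1\<bar> \<le> 1/16 + 17 * (x - 1 - ln x)"
proof -
  have "ln x \<le> x - 1"
    using assms by (rule ln_le_minus_one)
  moreover have "ln x \<le> ln (17/16) + 16/17 * x - 1" "ln x \<le> ln (15/16) + 16/15 * x - 1"
    using ln_le_tangent[of "17/16" x] ln_le_tangent[of "15/16" x] assms by simp_all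
  moreover have "ln (17/16::real) \<le> 1/16" "ln (15/16::real) \<le> -1/16"
    using ln_le_minus_one[of "17/16::real"] ln_le_minus_one[of "15/16::real"] by auto
  ultimately show ?thesis
    by (intro abs_leI; cases "x \<le> 15/16"; cases "x \<le> 17/16"; argo)
qed

lemma expectation_mult_le_ln_gap:
  fixes M :: "'a pmf" and L f :: "'a \<Rightarrow> real"
  assumes L: "integrable M L" "integrable M (\<lambda>x. ln (L x))" "\<And>x. 0 < L x"
    and f: "integrable M f" "\<And>x. 0 \<le> f x" "\<And>x. f x \<le> 1"
  shows "measure_pmf.expectation M (\<lambda>x. L x * f x) \<le> measure_pmf.expectation M f + 1/16
    + 17 * (measure_pmf.expectation M L - 1 - measure_pmf.expectation M (\<lambda>x. ln (L x)))"
proof -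
  have int_Lf: "integrable M (\<lambda>x. L x * f x)"
    by (rule Bochner_Integration.integrable_bound[OF L(1)]) (auto simp: abs_mult f intro!: mult_left_le)
  have "L x * f x \<le> f x + 1/16 + 17 * (L x - 1 - ln (L x))" for x
  proof -
    have "L x * f x = f x + (L x - 1) * f x"
      by algebra
    also have "(L x - 1) * f x \<le> \<bar>L x - 1\<bar> * f x"
      using f(2) by (intro mult_right_mono) auto
    also have "\<dots> \<le> \<bar>L x - 1\<bar>"
      using f(3) by (intro mult_left_le) auto
    also have "\<bar>L x - 1\<bar> \<le> 1/16 + 17 * (L x - 1 - ln (L x))"
      using L(3) by (rule abs_sub_one_le_ln_gap)
    finally show ?thesis
      by simp
  qed
  then have "measure_pmf.expectation M (\<lambda>x. L x * f x) \<le>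
      measure_pmf.expectation M (\<lambda>x. f x + 1/16 + 17 * (L x - 1 - ln (L x)))"
    using int_Lf L f by (intro integral_mono) auto
  also have "\<dots> = measure_pmf.expectation M f + 1/16
      + 17 * (measure_pmf.expectation M L - 1 - measure_pmf.expectation M (\<lambda>x. ln (L x)))"
    using L f by (simp add: measure_pmf.prob_space)
  finally show ?thesis .
qed

text \<open>\<open>kl_half d\<close> is the Kullback-Leibler divergence of Bernoulli(\<open>1/2 + d\<close>) from Bernoulli(\<open>1/2\<close>).\<close>

definition kl_half :: "real \<Rightarrow> real" where
  "kl_half d = (1/2) * (- ln (1 - 2 * d) - ln (1 + 2 * d))"

lemma kl_half_eq:
  assumes "0 \<le> d" "d < 1/2"
  shows "kl_half d = - ln (1 - 4 * d\<^sup>2) / 2"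
proof -
  have "ln (1 - 2 * d) + ln (1 + 2 * d) = ln ((1 - 2 * d) * (1 + 2 * d))"
    using assms by (intro ln_mult_pos[symmetric]) auto
  also have "(1 - 2 * d) * (1 + 2 * d) = 1 - 4 * d\<^sup>2"
    by (simp add: algebra_simps power2_eq_square)
  finally show ?thesis
    unfolding kl_half_def by simp
qed

lemma kl_half_nonneg:
  assumes "0 \<le> d" "d \<le> 1/4"
  shows "0 \<le> kl_half d"
proof -
  have "d\<^sup>2 \<le> (1/4)\<^sup>2"
    using assms by (intro power_mono) auto
  then have "ln (1 - 4 * d\<^sup>2) \<le> 0"
    by (subst ln_le_zero_iff) (auto simp: power2_eq_square)
  then show ?thesis
    using assms by (simp add: kl_half_eq)
qed

lemma kl_half_le:
  assumes "0 \<le> d" "d \<le> 1/4"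
  shows "kl_half d \<le> 4 * d\<^sup>2"
proof -
  define x where "x = 4 * d\<^sup>2"
  have "d\<^sup>2 \<le> (1/4)\<^sup>2"
    using assms by (intro power_mono) auto
  then have x: "0 \<le> x" "x \<le> 1/4"
    by (auto simp: x_def power2_eq_square)
  have "kl_half d = - ln (1 - x) / 2"
    using assms by (simp add: kl_half_eq x_def)
  moreover have "- x - 2 * (x * x) \<le> ln (1 - x)"
    using ln_one_minus_pos_lower_bound[of x] x by (simp add: power2_eq_square)
  moreover have "x * x \<le> x * (1/4)"
    using x by (intro mult_left_mono) auto
  ultimately have "kl_half d \<le> x"
    using x by linarith
  then show ?thesis
    by (simp add: x_def)
qed

section \<open>The hard instances\<close>

definition bernoulli01 :: "real \<Rightarrow> real pmf" where
  "bernoulli01 q = map_pmf (\<lambda>b. if b then 1 else 0) (bernoulli_pmf q)"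

lemma nn_integral_bernoulli01:
  "0 \<le> q \<Longrightarrow> q \<le> 1 \<Longrightarrow> (\<integral>\<^sup>+y. g y \<partial>bernoulli01 q) = g 1 * ennreal q + g 0 * ennreal (1 - q)"
  by (simp add: bernoulli01_def)

lemma integral_bernoulli01: "0 \<le> q \<Longrightarrow> q \<le> 1 \<Longrightarrow> (\<integral>y. y \<partial>bernoulli01 q) = q"
  by (simp add: bernoulli01_def)

lemma set_pmf_bernoulli01: "set_pmf (bernoulli01 q) \<subseteq> {0..1}"
  by (auto simp: bernoulli01_def)

definition hard_instance :: "(nat \<Rightarrow> real) \<Rightarrow> (nat \<Rightarrow> nat) \<Rightarrow> nat \<Rightarrow> nat \<Rightarrow> real pmf" where
  "hard_instance \<Delta> \<sigma> a c = (if a = \<sigma> c then bernoulli01 (1/2 + \<Delta> c) else bernoulli01 (1/2))"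

lemma valid_instance_hard_instance: "valid_instance (hard_instance \<Delta> \<sigma>)"
  using set_pmf_bernoulli01 by (simp add: valid_instance_def hard_instance_def)

lemma hard_instance_update_best: "hard_instance (\<Delta>(j := 0)) (\<sigma>(j := i)) = hard_instance (\<Delta>(j := 0)) \<sigma>"
  by (auto simp: hard_instance_def fun_eq_iff)

lemma mean_reward_hard_instance:
  "0 \<le> \<Delta> c \<Longrightarrow> \<Delta> c \<le> 1/2 \<Longrightarrow>
    mean_reward (hard_instance \<Delta> \<sigma>) a c = (if a = \<sigma> c then 1/2 + \<Delta> c else 1/2)"
  by (simp add: mean_reward_def hard_instance_def integral_bernoulli01)

lemma best_mean_hard_instance:
  assumes "\<sigma> j < n" "0 \<le> \<Delta> j" "\<Delta> j \<le> 1/2"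
  shows "best_mean n (hard_instance \<Delta> \<sigma>) j = 1/2 + \<Delta> j"
  unfolding best_mean_def
proof (rule Max_eqI)
  show "y \<le> 1/2 + \<Delta> j" if "y \<in> (\<lambda>i. mean_reward (hard_instance \<Delta> \<sigma>) i j) ` {..<n}" for y
    using that assms by (auto simp: mean_reward_hard_instance)
  show "1/2 + \<Delta> j \<in> (\<lambda>i. mean_reward (hard_instance \<Delta> \<sigma>) i j) ` {..<n}"
    using assms by (intro image_eqI[where x="\<sigma> j"]) (auto simp: mean_reward_hard_instance)
qed simp

lemma simple_regret_hard_instance:
  assumes "\<And>j. j < k \<Longrightarrow> \<sigma> j < n" "\<And>c. 0 \<le> \<Delta> c" "\<And>c. \<Delta> c \<le> 1/2"
  shows "simple_regret n k \<pi> T (hard_instance \<Delta> \<sigma>) p = (\<Sum>j<k. p j * \<Delta> j *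
    (1 - (\<integral>h. pmf (rec_rule \<pi> h j) (\<sigma> j) \<partial>history \<pi> (hard_instance \<Delta> \<sigma>) T)))"
  unfolding simple_regret_def
proof (intro sum.cong refl)
  fix j
  assume "j \<in> {..<k}"
  let ?B = "bind_pmf (history \<pi> (hard_instance \<Delta> \<sigma>) T) (\<lambda>h. rec_rule \<pi> h j)"
  have "measure_pmf.expectation ?B
      (\<lambda>a. best_mean n (hard_instance \<Delta> \<sigma>) j - mean_reward (hard_instance \<Delta> \<sigma>) a j) =
      measure_pmf.expectation ?B (\<lambda>a. \<Delta> j - \<Delta> j * indicator {\<sigma> j} a)"
    using assms \<open>j \<in> {..<k}\<close>
    by (intro Bochner_Integration.integral_cong)
      (auto simp: best_mean_hard_instance mean_reward_hard_instance indicator_def)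
  also have "\<dots> = \<Delta> j - \<Delta> j * measure_pmf.expectation ?B (indicator {\<sigma> j})"
    using measure_pmf.integrable_const_bound[where M="?B" and f="indicator {\<sigma> j} :: nat \<Rightarrow> real" and B=1]
    by (subst Bochner_Integration.integral_diff) (auto simp: measure_pmf.prob_space)
  also have "measure_pmf.expectation ?B (indicator {\<sigma> j}) = pmf ?B (\<sigma> j)"
    by (simp add: measure_pmf_single)
  also have "pmf ?B (\<sigma> j) = (\<integral>h. pmf (rec_rule \<pi> h j) (\<sigma> j) \<partial>history \<pi> (hard_instance \<Delta> \<sigma>) T)"
    by (rule pmf_bind)
  finally show "p j * measure_pmf.expectation ?B
      (\<lambda>a. best_mean n (hard_instance \<Delta> \<sigma>) j - mean_reward (hard_instance \<Delta> \<sigma>) a j) =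
      p j * \<Delta> j * (1 - (\<integral>h. pmf (rec_rule \<pi> h j) (\<sigma> j) \<partial>history \<pi> (hard_instance \<Delta> \<sigma>) T))"
    by (simp add: right_diff_distrib mult.assoc)
qed

lemma mean_reward_bounds:
  assumes "valid_instance \<nu>"
  shows "0 \<le> mean_reward \<nu> i j" "mean_reward \<nu> i j \<le> 1"
proof -
  have "set_pmf (\<nu> i j) \<subseteq> {0..1}"
    using assms by (simp add: valid_instance_def)
  then have range: "AE y in \<nu> i j. 0 \<le> y \<and> y \<le> 1"
    by (intro AE_pmfI) auto
  then have "integrable (\<nu> i j) (\<lambda>y. y)"
    by (intro measure_pmf.integrable_const_bound[where B=1]) auto
  with range show "0 \<le> mean_reward \<nu> i j" "mean_reward \<nu> i j \<le> 1"
    unfolding mean_reward_def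
    by (auto intro!: integral_nonneg_AE measure_pmf.integral_le_const elim: AE_mp)
qed

lemma simple_regret_le_worst_simple_regret:
  assumes "valid_instance \<nu>" "1 \<le> n" "\<And>j. j < k \<Longrightarrow> 0 \<le> p j"
  shows "simple_regret n k \<pi> T \<nu> p \<le> worst_simple_regret n k \<pi> T p"
  unfolding worst_simple_regret_def
proof (rule cSUP_upper)
  have "simple_regret n k \<pi> T \<nu>' p \<le> (\<Sum>j<k. p j)" if "valid_instance \<nu>'" for \<nu>'
    unfolding simple_regret_def
  proof (rule sum_mono)
    fix j
    assume "j \<in> {..<k}"
    have ne: "(\<lambda>i. mean_reward \<nu>' i j) ` {..<n} \<noteq> {}"
      using \<open>1 \<le> n\<close> by (simp add: lessThan_empty_iff)
    have "0 \<le> best_mean n \<nu>' j"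
      unfolding best_mean_def using ne mean_reward_bounds[OF that, of 0 j] \<open>1 \<le> n\<close>
      by (subst Max_ge_iff) auto
    moreover have "best_mean n \<nu>' j \<le> 1"
      unfolding best_mean_def using ne mean_reward_bounds[OF that] by (subst Max_le_iff) auto
    ultimately have gap: "\<bar>best_mean n \<nu>' j - mean_reward \<nu>' a j\<bar> \<le> 1" for a
      using mean_reward_bounds[OF that, of a j] by auto
    let ?B = "bind_pmf (history \<pi> \<nu>' T) (\<lambda>h. rec_rule \<pi> h j)"
    have "measure_pmf.expectation ?B (\<lambda>a. best_mean n \<nu>' j - mean_reward \<nu>' a j) \<le> 1"
      using gap by (intro measure_pmf.integral_le_const measure_pmf.integrable_const_bound[where B=1])
        (auto simp: abs_le_iff)
    then show "p j * measure_pmf.expectation ?B (\<lambda>a. best_mean n \<nu>' j - mean_reward \<nu>' a j) \<le> p j"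
      using assms(3) \<open>j \<in> {..<k}\<close> by (simp add: mult_left_le)
  qed
  then show "bdd_above ((\<lambda>\<nu>. simple_regret n k \<pi> T \<nu> p) ` {\<nu>. valid_instance \<nu>})"
    by (auto intro!: bdd_aboveI)
qed (use assms in simp)

definition ctx_count :: "nat \<Rightarrow> hist \<Rightarrow> nat" where
  "ctx_count j h = length (filter (\<lambda>x. fst (snd x) = j) h)"

lemma ctx_count_snoc [simp]: "ctx_count j (h @ [(a, c, y)]) = ctx_count j h + (if c = j then 1 else 0)"
  by (simp add: ctx_count_def)

lemma ctx_count_le_length: "ctx_count j h \<le> length h"
  by (simp add: ctx_count_def)

lemma sum_ctx_count_le: "(\<Sum>j<k. real (ctx_count j h)) \<le> real (length h)"
proof (induction h rule: rev_induct)
  case (snoc x h)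
  obtain a c y where x: "x = (a, c, y)"
    by (cases x) auto
  have "(\<Sum>j<k. real (ctx_count j (h @ [x]))) = (\<Sum>j<k. real (ctx_count j h) + (if c = j then 1 else 0))"
    by (intro sum.cong) (auto simp: x)
  also have "\<dots> = (\<Sum>j<k. real (ctx_count j h)) + (\<Sum>j<k. if c = j then 1 else 0)"
    by (rule sum.distrib)
  also have "(\<Sum>j<k. if c = j then 1 else 0::real) \<le> 1"
    by (cases "c < k") (simp_all add: sum.delta)
  finally show ?case
    using snoc by simp
qed (simp add: ctx_count_def)

definition early_pull :: "nat \<Rightarrow> nat \<Rightarrow> real \<Rightarrow> hist \<Rightarrow> nat \<Rightarrow> nat \<Rightarrow> bool" where
  "early_pull i j m h a c \<longleftrightarrow> c = j \<and> a = i \<and> real (ctx_count j h) < m"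

definition early_pulls :: "nat \<Rightarrow> nat \<Rightarrow> real \<Rightarrow> hist \<Rightarrow> real" where
  "early_pulls i j m = path_sum (\<lambda>h a c y. if early_pull i j m h a c then 1 else 0)"

lemma early_pulls_bounds: "0 \<le> early_pulls i j m h" "early_pulls i j m h \<le> real (length h)"
  unfolding early_pulls_def
  using path_sum_nonneg[of "\<lambda>h a c y. if early_pull i j m h a c then 1 else 0" h]
    path_sum_le[of "\<lambda>h a c y. if early_pull i j m h a c then 1 else 0" 1 h] by auto

lemma path_sum_early_samples_le:
  assumes "0 \<le> m"
  shows "path_sum (\<lambda>h a c y. if c = j \<and> real (ctx_count j h) < m then 1 else 0) h \<le> real (ctx_count j h) \<and>
         path_sum (\<lambda>h a c y. if c = j \<and> real (ctx_count j h) < m then 1 else 0) h \<le> m + 1"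
proof (induction h rule: rev_induct)
  case (snoc x h)
  obtain a c y where x: "x = (a, c, y)"
    by (cases x) auto
  show ?case
    using snoc by (auto simp: x)
qed (use assms in simp)

lemma sum_early_pulls_le:
  assumes "0 \<le> m"
  shows "(\<Sum>i<n. early_pulls i j m h) \<le> m + 1"
proof -
  have "(\<Sum>i<n. early_pulls i j m h) = path_sum (\<lambda>h a c y. \<Sum>i<n. if early_pull i j m h a c then 1 else 0) h"
    unfolding early_pulls_def path_sum_def by (rule sum.swap)
  also have "\<dots> \<le> path_sum (\<lambda>h a c y. if c = j \<and> real (ctx_count j h) < m then 1 else 0) h"
    unfolding path_sum_def
  proof (rule sum_mono)
    fix s
    let ?h = "take s h" and ?a = "fst (h!s)" and ?c = "fst (snd (h!s))"
    have "(\<Sum>i<n. if early_pull i j m ?h ?a ?c then 1 else 0::real) =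
        (\<Sum>i\<in>{..<n} \<inter> {?a}. if ?c = j \<and> real (ctx_count j ?h) < m then 1 else 0)"
      by (rule sum.mono_neutral_cong_right) (auto simp: early_pull_def)
    also have "\<dots> \<le> (if ?c = j \<and> real (ctx_count j ?h) < m then 1 else 0)"
      by (cases "?a < n") auto
    finally show "(\<Sum>i<n. if early_pull i j m ?h ?a ?c then 1 else 0::real) \<le>
        (if ?c = j \<and> real (ctx_count j ?h) < m then 1 else 0)" .
  qed
  also have "\<dots> \<le> m + 1"
    using path_sum_early_samples_le[OF assms] by blast
  finally show ?thesis .
qed

section \<open>Change of measure for one subpopulation\<close>

text \<open>This kernel
  agrees with \<open>hard_instance \<Delta> \<sigma>\<close> until subpopulation \<open>j\<close> is sampled more than \<open>m\<close> times, and its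
  likelihood ratio against \<open>hard_instance (\<Delta>(j := 0)) \<sigma>\<close> involves only the early pulls of \<open>\<sigma> j\<close>.\<close>

definition truncated_kernel :: "(nat \<Rightarrow> real) \<Rightarrow> (nat \<Rightarrow> nat) \<Rightarrow> nat \<Rightarrow> real \<Rightarrow> reward_kernel" where
  "truncated_kernel \<Delta> \<sigma> j m h a c =
     (if c = j \<and> m \<le> real (ctx_count j h) then bernoulli01 (1/2) else hard_instance \<Delta> \<sigma> a c)"

definition lik_ratio :: "(nat \<Rightarrow> real) \<Rightarrow> (nat \<Rightarrow> nat) \<Rightarrow> nat \<Rightarrow> real \<Rightarrow> step_fun" where
  "lik_ratio \<Delta> \<sigma> j m h a c y =
     (if early_pull (\<sigma> j) j m h a c then (if y = 1 then 1 + 2 * \<Delta> j else 1 - 2 * \<Delta> j) else 1)"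

lemma lik_ratio_bounds:
  assumes "0 \<le> \<Delta> j" "\<Delta> j \<le> 1/4"
  shows "1/2 \<le> lik_ratio \<Delta> \<sigma> j m h a c y" "lik_ratio \<Delta> \<sigma> j m h a c y \<le> 2"
  using assms by (auto simp: lik_ratio_def)

lemma abs_ln_lik_ratio_le:
  assumes "0 \<le> \<Delta> j" "\<Delta> j \<le> 1/4"
  shows "\<bar>ln (lik_ratio \<Delta> \<sigma> j m h a c y)\<bar> \<le> 1"
proof -
  let ?r = "lik_ratio \<Delta> \<sigma> j m h a c y"
  have r: "1/2 \<le> ?r" "?r \<le> 2"
    using lik_ratio_bounds[where \<Delta>=\<Delta> and j=j, OF assms] by auto
  have "ln ?r \<le> ?r - 1"
    using r by (intro ln_le_minus_one) auto
  moreover have "- ln 2 \<le> ln ?r"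
    using r ln_le_cancel_iff[of "1/2" ?r] by (simp add: ln_div)
  moreover have "ln (2::real) \<le> 1"
    using ln_2_less_1 by simp
  ultimately show ?thesis
    using r by (simp add: abs_le_iff)
qed

lemma nn_integral_truncated_kernel:
  assumes "0 \<le> \<Delta> j" "\<Delta> j \<le> 1/2"
  shows "(\<integral>\<^sup>+y. g y \<partial>truncated_kernel \<Delta> \<sigma> j m h a c) =
    (\<integral>\<^sup>+y. ennreal (lik_ratio \<Delta> \<sigma> j m h a c y) * g y \<partial>hard_instance (\<Delta>(j := 0)) \<sigma> a c)"
proof (cases "early_pull (\<sigma> j) j m h a c")
  case True
  then have kernels: "truncated_kernel \<Delta> \<sigma> j m h a c = bernoulli01 (1/2 + \<Delta> j)"
      "hard_instance (\<Delta>(j := 0)) \<sigma> a c = bernoulli01 (1/2)"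
    by (auto simp: early_pull_def truncated_kernel_def hard_instance_def)
  have weights: "ennreal (1/2 + \<Delta> j) = ennreal (1 + 2 * \<Delta> j) * ennreal (1/2)"
      "ennreal (1 - (1/2 + \<Delta> j)) = ennreal (1 - 2 * \<Delta> j) * ennreal (1 - 1/2)"
    using assms by (subst ennreal_mult[symmetric]; simp add: field_simps)+
  have "(\<integral>\<^sup>+y. g y \<partial>truncated_kernel \<Delta> \<sigma> j m h a c) =
      g 1 * ennreal (1/2 + \<Delta> j) + g 0 * ennreal (1 - (1/2 + \<Delta> j))"
    unfolding kernels using assms by (intro nn_integral_bernoulli01) auto
  also have "\<dots> = ennreal (1 + 2 * \<Delta> j) * g 1 * ennreal (1/2) + ennreal (1 - 2 * \<Delta> j) * g 0 * ennreal (1 - 1/2)"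
    unfolding weights by (simp only: mult_ac)
  also have "\<dots> = (\<integral>\<^sup>+y. ennreal (lik_ratio \<Delta> \<sigma> j m h a c y) * g y \<partial>hard_instance (\<Delta>(j := 0)) \<sigma> a c)"
    unfolding kernels nn_integral_bernoulli01[of "1/2", OF _ _, simplified] using True
    by (simp add: lik_ratio_def)
  finally show ?thesis .
next
  case False
  then show ?thesis
    by (auto simp: early_pull_def truncated_kernel_def hard_instance_def lik_ratio_def)
qed

lemma nn_integral_null_early_pull:
  fixes g :: step_fun
  assumes "\<And>h a c y. \<not> early_pull (\<sigma> j) j m h a c \<Longrightarrow> g h a c y = 0"
    and "\<And>h a c y. 0 \<le> g h a c y"
  shows "(\<integral>\<^sup>+y. ennreal (g h a c y) \<partial>hard_instance (\<Delta>(j := 0)) \<sigma> a c) =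
    ennreal ((g h a c 1 + g h a c 0) / 2 * (if early_pull (\<sigma> j) j m h a c then 1 else 0))"
proof (cases "early_pull (\<sigma> j) j m h a c")
  case True
  then have "hard_instance (\<Delta>(j := 0)) \<sigma> a c = bernoulli01 (1/2)"
    by (auto simp: early_pull_def hard_instance_def)
  then have "(\<integral>\<^sup>+y. ennreal (g h a c y) \<partial>hard_instance (\<Delta>(j := 0)) \<sigma> a c) =
      ennreal (g h a c 1) * ennreal (1/2) + ennreal (g h a c 0) * ennreal (1 - 1/2)"
    by (simp only: nn_integral_bernoulli01[of "1/2"])
  also have "\<dots> = ennreal (g h a c 1 * (1/2)) + ennreal (g h a c 0 * (1/2))"
  proof -
    have "0 \<le> g h a c 1" "0 \<le> g h a c 0" "(0::real) \<le> 1/2" "(1::real) - 1/2 = 1/2"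
      using assms(2) by auto
    then show ?thesis
      by (simp only: ennreal_mult[symmetric])
  qed
  also have "\<dots> = ennreal (g h a c 1 * (1/2) + g h a c 0 * (1/2))"
    using assms(2)[of h a c 1] assms(2)[of h a c 0] by (intro ennreal_plus[symmetric]) auto
  finally show ?thesis
    using True by (simp add: add_divide_distrib)
next
  case False
  then show ?thesis
    using assms(1) by simp
qed

lemma lik_ratio_pos:
  assumes "0 \<le> \<Delta> j" "\<Delta> j \<le> 1/4"
  shows "0 < lik_ratio \<Delta> \<sigma> j m h a c y"
  using lik_ratio_bounds(1)[where \<Delta>=\<Delta> and j=j and \<sigma>=\<sigma> and m=m and h=h and a=a and c=c and y=y, OF assms]
  by linarith

lemma ln_path_prod_lik_ratio:
  assumes "0 \<le> \<Delta> j" "\<Delta> j \<le> 1/4"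
  shows "ln (path_prod (lik_ratio \<Delta> \<sigma> j m) h) =
    path_sum (\<lambda>h a c y. if early_pull (\<sigma> j) j m h a c \<and> y = 1 then ln (1 + 2 * \<Delta> j) else 0) h -
    path_sum (\<lambda>h a c y. if early_pull (\<sigma> j) j m h a c \<and> y \<noteq> 1 then - ln (1 - 2 * \<Delta> j) else 0) h"
proof -
  have "ln (path_prod (lik_ratio \<Delta> \<sigma> j m) h) = path_sum (\<lambda>h a c y. ln (lik_ratio \<Delta> \<sigma> j m h a c y)) h"
    using lik_ratio_pos[where \<Delta>=\<Delta> and j=j, OF assms] by (rule ln_path_prod)
  also have "\<dots> = path_sum (\<lambda>h a c y.
      (if early_pull (\<sigma> j) j m h a c \<and> y = 1 then ln (1 + 2 * \<Delta> j) else 0) -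
      (if early_pull (\<sigma> j) j m h a c \<and> y \<noteq> 1 then - ln (1 - 2 * \<Delta> j) else 0)) h"
    by (rule path_sum_cong) (simp add: lik_ratio_def)
  finally show ?thesis
    by (simp only: path_sum_diff)
qed

lemma expectation_path_sum_early_pull:
  fixes \<pi> :: policy and \<sigma> :: "nat \<Rightarrow> nat" and \<Delta> :: "nat \<Rightarrow> real" and T j :: nat
    and P :: "real \<Rightarrow> bool"
  assumes "P 1 \<noteq> P 0" "0 \<le> x" "x \<le> 1"
  defines "Z \<equiv> history \<pi> (hard_instance (\<Delta>(j := 0)) \<sigma>) T"
  shows "(\<integral>h. path_sum (\<lambda>h a c y. if early_pull (\<sigma> j) j m h a c \<and> P y then x else 0) h \<partial>Z) =
    x / 2 * (\<integral>h. early_pulls (\<sigma> j) j m h \<partial>Z)"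
proof -
  let ?u = "\<lambda>h a c y. if early_pull (\<sigma> j) j m h a c \<and> P y then x else 0"
  have "(\<integral>h. path_sum ?u h \<partial>Z) = (\<integral>h. path_sum (\<lambda>h a c y.
      (?u h a c 1 + ?u h a c 0) / 2 * (if early_pull (\<sigma> j) j m h a c then 1 else 0)) h \<partial>Z)"
    unfolding Z_def history_eq_adaptive_history
  proof (rule integral_path_sum_compensator[where B=1])
    show "(\<integral>\<^sup>+y. ennreal (?u h a c y) \<partial>hard_instance (\<Delta>(j := 0)) \<sigma> a c) =
        ennreal ((?u h a c 1 + ?u h a c 0) / 2 * (if early_pull (\<sigma> j) j m h a c then 1 else 0))" for h a c
      by (rule nn_integral_null_early_pull) (simp_all add: assms)
  qed (use assms in simp_all)
  also have "\<dots> = (\<integral>h. x / 2 * early_pulls (\<sigma> j) j m h \<partial>Z)"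
    unfolding early_pulls_def path_sum_cmult[symmetric] using assms(1)
    by (intro Bochner_Integration.integral_cong refl path_sum_cong) auto
  finally show ?thesis
    by simp
qed

lemma expectation_ln_lik_ratio:
  fixes \<pi> :: policy and \<sigma> :: "nat \<Rightarrow> nat" and T :: nat
  assumes "0 \<le> \<Delta> j" "\<Delta> j \<le> 1/4"
  defines "Z \<equiv> history \<pi> (hard_instance (\<Delta>(j := 0)) \<sigma>) T"
  shows "(\<integral>h. ln (path_prod (lik_ratio \<Delta> \<sigma> j m) h) \<partial>Z) =
    - kl_half (\<Delta> j) * (\<integral>h. early_pulls (\<sigma> j) j m h \<partial>Z)"
proof -
  define a1 where "a1 = - ln (1 - 2 * \<Delta> j)"
  define a2 where "a2 = ln (1 + 2 * \<Delta> j)"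
  define u1 where "u1 = (\<lambda>h a c (y::real). if early_pull (\<sigma> j) j m h a c \<and> y \<noteq> 1 then a1 else 0)"
  define u2 where "u2 = (\<lambda>h a c (y::real). if early_pull (\<sigma> j) j m h a c \<and> y = 1 then a2 else 0)"
  have "ln (1/2) \<le> ln (1 - 2 * \<Delta> j)"
    using assms(1,2) by (subst ln_le_cancel_iff) auto
  then have a1: "0 \<le> a1" "a1 \<le> 1"
    using assms(1,2) ln_2_less_1 by (auto simp: a1_def ln_div)
  have a2: "0 \<le> a2" "a2 \<le> 1"
    using assms(1,2) ln_le_minus_one[of "1 + 2 * \<Delta> j"] by (auto simp: a2_def)
  have E1: "(\<integral>h. path_sum u1 h \<partial>Z) = a1 / 2 * (\<integral>h. early_pulls (\<sigma> j) j m h \<partial>Z)"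
    unfolding u1_def Z_def by (rule expectation_path_sum_early_pull) (use a1 in auto)
  have E2: "(\<integral>h. path_sum u2 h \<partial>Z) = a2 / 2 * (\<integral>h. early_pulls (\<sigma> j) j m h \<partial>Z)"
    unfolding u2_def Z_def by (rule expectation_path_sum_early_pull) (use a2 in auto)
  have "integrable Z (path_sum u1)" "integrable Z (path_sum u2)"
    unfolding Z_def history_eq_adaptive_history using a1 a2
    by (intro integrable_adaptive_history[where B="real T"] order_trans[OF abs_path_sum_le[where B=1]];
        simp add: u1_def u2_def)+
  then have "(\<integral>h. ln (path_prod (lik_ratio \<Delta> \<sigma> j m) h) \<partial>Z) =
      (\<integral>h. path_sum u2 h \<partial>Z) - (\<integral>h. path_sum u1 h \<partial>Z)"
    unfolding ln_path_prod_lik_ratio[where \<Delta>=\<Delta> and j=j, OF assms(1,2)] a1_def[symmetric] a2_def[symmetric]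
      u1_def[symmetric] u2_def[symmetric]
    by (rule Bochner_Integration.integral_diff[rotated])
  also have "\<dots> = (a2 / 2 - a1 / 2) * (\<integral>h. early_pulls (\<sigma> j) j m h \<partial>Z)"
    by (simp only: E1 E2 left_diff_distrib)
  also have "a2 / 2 - a1 / 2 = - kl_half (\<Delta> j)"
    by (simp add: kl_half_def a1_def a2_def field_simps)
  finally show ?thesis .
qed

lemma expectation_le_null_instance:
  fixes f :: "hist \<Rightarrow> real" and \<pi> :: policy and \<sigma> :: "nat \<Rightarrow> nat" and T j :: nat
  assumes \<Delta>: "\<And>c. 0 \<le> \<Delta> c" "\<And>c. \<Delta> c \<le> 1/4" and f: "\<And>h. 0 \<le> f h" "\<And>h. f h \<le> 1"
  defines "P \<equiv> history \<pi> (hard_instance \<Delta> \<sigma>) T" and "Z \<equiv> history \<pi> (hard_instance (\<Delta>(j := 0)) \<sigma>) T"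
  shows "(\<integral>h. f h \<partial>P) \<le> (\<integral>h. f h \<partial>Z) + 1/16 + 17 * kl_half (\<Delta> j) * (\<integral>h. early_pulls (\<sigma> j) j m h \<partial>Z)
    + (\<integral>h. (if m < real (ctx_count j h) then 1 else 0) \<partial>P)"
proof -
  define H where "H = adaptive_history \<pi> (truncated_kernel \<Delta> \<sigma> j m) T"
  define L where "L = path_prod (lik_ratio \<Delta> \<sigma> j m)"
  have P: "P = adaptive_history \<pi> (\<lambda>h a c. hard_instance \<Delta> \<sigma> a c) T"
    and Z: "Z = adaptive_history \<pi> (\<lambda>h a c. hard_instance (\<Delta>(j := 0)) \<sigma> a c) T"
    by (simp_all add: P_def Z_def history_eq_adaptive_history)
  have r: "1/2 \<le> lik_ratio \<Delta> \<sigma> j m h a c y" "lik_ratio \<Delta> \<sigma> j m h a c y \<le> 2" for h a c y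
    using lik_ratio_bounds[where \<Delta>=\<Delta> and j=j] \<Delta> by auto
  have r_pos: "0 < lik_ratio \<Delta> \<sigma> j m h a c y" for h a c y
    using r(1)[of h a c y] by linarith
  then have r_nonneg: "0 \<le> lik_ratio \<Delta> \<sigma> j m h a c y" for h a c y
    by (rule less_imp_le)
  have density: "(\<integral>\<^sup>+y. g y \<partial>truncated_kernel \<Delta> \<sigma> j m h a c) =
      (\<integral>\<^sup>+y. ennreal (lik_ratio \<Delta> \<sigma> j m h a c y) * g y \<partial>hard_instance (\<Delta>(j := 0)) \<sigma> a c)" for g h a c
    using \<Delta>[of j] by (intro nn_integral_truncated_kernel) auto
  have coupling: "(\<integral>h. f h \<partial>P) \<le> (\<integral>h. f h \<partial>H) + (\<integral>h. (if m < real (ctx_count j h) then 1 else 0) \<partial>P)"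
    unfolding P H_def
  proof (rule integral_adaptive_history_coupling_le[OF _ _ f])
    show "m < real (ctx_count j (h @ [x]))" if "m < real (ctx_count j h)" for h x
      using that by (auto simp: ctx_count_def)
    show "m < real (ctx_count j (h @ [(a, c, y)]))"
      if "hard_instance \<Delta> \<sigma> a c \<noteq> truncated_kernel \<Delta> \<sigma> j m h a c" for h a c y
      using that by (auto simp: truncated_kernel_def split: if_splits)
  qed
  have change: "(\<integral>h. g h \<partial>H) = (\<integral>h. L h * g h \<partial>Z)" if "\<And>h. 0 \<le> g h" "\<And>h. g h \<le> 1" for g
    unfolding H_def Z L_def using that
    by (intro integral_adaptive_history_density[OF density r_nonneg r(2)]) auto
  have L_pos: "0 < L h" for h
    unfolding L_def using r_pos by (rule path_prod_pos)
  have "integrable Z L"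
    unfolding Z
  proof (rule integrable_adaptive_history[where B="2 ^ T"])
    show "\<bar>L h\<bar> \<le> 2 ^ T" if "length h = T" for h
      using path_prod_le_power[of "lik_ratio \<Delta> \<sigma> j m" 2 h] r_nonneg r(2) that L_pos[of h]
      by (simp add: L_def)
  qed
  moreover have "integrable Z (\<lambda>h. ln (L h))"
    unfolding Z
  proof (rule integrable_adaptive_history[where B="real T"])
    show "\<bar>ln (L h)\<bar> \<le> real T" if "length h = T" for h
      using abs_path_sum_le[of "\<lambda>h a c y. ln (lik_ratio \<Delta> \<sigma> j m h a c y)" 1 h]
        abs_ln_lik_ratio_le[where \<Delta>=\<Delta> and j=j] \<Delta> that ln_path_prod[OF r_pos]
      by (simp add: L_def)
  qed
  moreover have "integrable Z f"
    unfolding Z using f by (intro integrable_adaptive_history[where B=1]) auto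
  ultimately have "(\<integral>h. L h * f h \<partial>Z) \<le> (\<integral>h. f h \<partial>Z) + 1/16
      + 17 * ((\<integral>h. L h \<partial>Z) - 1 - (\<integral>h. ln (L h) \<partial>Z))"
    using L_pos f by (intro expectation_mult_le_ln_gap)
  moreover have "(\<integral>h. L h \<partial>Z) = 1"
    using change[of "\<lambda>_. 1"] by simp
  moreover have "(\<integral>h. ln (L h) \<partial>Z) = - kl_half (\<Delta> j) * (\<integral>h. early_pulls (\<sigma> j) j m h \<partial>Z)"
    unfolding L_def Z_def using \<Delta> by (intro expectation_ln_lik_ratio)
  ultimately show ?thesis
    using coupling change[OF f] by (simp add: algebra_simps)
qed

section \<open>Averaging over the positions of the best treatments\<close>

text \<open>Computed under the null instance, this bound does not depend on \<open>\<sigma> j\<close>, which is what makes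
  the average over \<open>\<sigma> j\<close> small.\<close>

definition recommend_bound :: "policy \<Rightarrow> nat \<Rightarrow> (nat \<Rightarrow> real) \<Rightarrow> (nat \<Rightarrow> nat) \<Rightarrow> nat \<Rightarrow> real \<Rightarrow> nat \<Rightarrow> real" where
  "recommend_bound \<pi> T \<Delta> \<sigma> j m i =
     (\<integral>h. pmf (rec_rule \<pi> h j) i \<partial>history \<pi> (hard_instance (\<Delta>(j := 0)) \<sigma>) T)
     + 17 * kl_half (\<Delta> j) * (\<integral>h. early_pulls i j m h \<partial>history \<pi> (hard_instance (\<Delta>(j := 0)) \<sigma>) T)"

lemma recommend_bound_update_best: "recommend_bound \<pi> T \<Delta> (\<sigma>(j := i')) j m i = recommend_bound \<pi> T \<Delta> \<sigma> j m i"
  by (simp add: recommend_bound_def hard_instance_update_best)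

lemma recommend_prob_le:
  assumes "\<And>c. 0 \<le> \<Delta> c" "\<And>c. \<Delta> c \<le> 1/4" "0 < m"
  shows "(\<integral>h. pmf (rec_rule \<pi> h j) (\<sigma> j) \<partial>history \<pi> (hard_instance \<Delta> \<sigma>) T) \<le>
    recommend_bound \<pi> T \<Delta> \<sigma> j m (\<sigma> j) + 1/16 + (\<integral>h. real (ctx_count j h) \<partial>history \<pi> (hard_instance \<Delta> \<sigma>) T) / m"
proof -
  let ?P = "history \<pi> (hard_instance \<Delta> \<sigma>) T"
  have "\<bar>real (ctx_count j h) / m\<bar> \<le> real T / m" if "length h = T" for h
    using ctx_count_le_length[of j h] that \<open>0 < m\<close> by (simp add: divide_right_mono)
  then have int: "integrable ?P (\<lambda>h. real (ctx_count j h) / m)"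
    "integrable ?P (\<lambda>h. if m < real (ctx_count j h) then 1 else 0 :: real)"
    unfolding history_eq_adaptive_history
    by (auto intro: integrable_adaptive_history[where B="real T / m"] integrable_adaptive_history[where B=1])
  have "(\<integral>h. (if m < real (ctx_count j h) then 1 else 0) \<partial>?P) \<le> (\<integral>h. real (ctx_count j h) / m \<partial>?P)"
    using int \<open>0 < m\<close> by (intro integral_mono) auto
  then show ?thesis
    using expectation_le_null_instance[of \<Delta> "\<lambda>h. pmf (rec_rule \<pi> h j) (\<sigma> j)" \<pi> \<sigma> T j m] assms
    by (simp add: recommend_bound_def pmf_le_1 algebra_simps)
qed

lemma sum_recommend_bound_le:
  assumes "0 \<le> \<Delta> j" "\<Delta> j \<le> 1/4" "0 \<le> m"
  shows "(\<Sum>i<n. recommend_bound \<pi> T \<Delta> \<sigma> j m i) \<le> 1 + 17 * kl_half (\<Delta> j) * (m + 1)"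
proof -
  define Z where "Z = history \<pi> (hard_instance (\<Delta>(j := 0)) \<sigma>) T"
  have int_rec: "integrable Z (\<lambda>h. pmf (rec_rule \<pi> h j) i)" for i
    unfolding Z_def history_eq_adaptive_history
    by (rule integrable_adaptive_history[where B=1]) (simp add: pmf_le_1)
  have int_early: "integrable Z (early_pulls i j m)" for i
    unfolding Z_def history_eq_adaptive_history
    by (rule integrable_adaptive_history[where B="real T"]) (use early_pulls_bounds in auto)
  have "(\<Sum>i<n. recommend_bound \<pi> T \<Delta> \<sigma> j m i) = (\<integral>h. (\<Sum>i<n. pmf (rec_rule \<pi> h j) i) \<partial>Z)
      + 17 * kl_half (\<Delta> j) * (\<integral>h. (\<Sum>i<n. early_pulls i j m h) \<partial>Z)"
    unfolding recommend_bound_def Z_def[symmetric]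
    by (simp add: Bochner_Integration.integral_sum[OF int_rec] Bochner_Integration.integral_sum[OF int_early]
        sum.distrib sum_distrib_left)
  also have "(\<integral>h. (\<Sum>i<n. pmf (rec_rule \<pi> h j) i) \<partial>Z) \<le> 1"
  proof (rule measure_pmf.integral_le_const)
    show "integrable Z (\<lambda>h. \<Sum>i<n. pmf (rec_rule \<pi> h j) i)"
      using int_rec by simp
    show "AE h in Z. (\<Sum>i<n. pmf (rec_rule \<pi> h j) i) \<le> 1"
      by (simp add: measure_measure_pmf_finite[symmetric])
  qed
  also have "(\<integral>h. (\<Sum>i<n. early_pulls i j m h) \<partial>Z) \<le> m + 1"
    using int_early \<open>0 \<le> m\<close> by (intro measure_pmf.integral_le_const AE_I2 sum_early_pulls_le) auto
  finally show ?thesis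
    using kl_half_nonneg[OF assms(1,2)] by (simp add: mult_left_mono)
qed

text \<open>Reindexing by the involution \<open>(\<sigma>, i) \<mapsto> (\<sigma>(j := i), \<sigma> j)\<close> of \<open>PiE I A \<times> A\<close>.\<close>

lemma sum_PiE_eval_eq:
  fixes F :: "('a \<Rightarrow> 'b) \<Rightarrow> 'b \<Rightarrow> real"
  assumes "j \<in> I" "finite A"
    and F: "\<And>\<sigma> i i'. \<sigma> \<in> PiE I (\<lambda>_. A) \<Longrightarrow> i' \<in> A \<Longrightarrow> F (\<sigma>(j := i')) i = F \<sigma> i"
  shows "real (card A) * (\<Sum>\<sigma>\<in>PiE I (\<lambda>_. A). F \<sigma> (\<sigma> j)) = (\<Sum>\<sigma>\<in>PiE I (\<lambda>_. A). \<Sum>i\<in>A. F \<sigma> i)"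
proof -
  let ?S = "PiE I (\<lambda>_. A)"
  define swap where "swap = (\<lambda>(\<tau> :: 'a \<Rightarrow> 'b, i). (\<tau>(j := i), \<tau> j))"
  have swap_S: "swap x \<in> ?S \<times> A" "swap (swap x) = x" if "x \<in> ?S \<times> A" for x
    using that \<open>j \<in> I\<close> by (auto simp: swap_def PiE_iff extensional_def split: prod.splits)
  have "(\<Sum>\<sigma>\<in>?S. \<Sum>i\<in>A. F \<sigma> i) = (\<Sum>(\<sigma>, i)\<in>?S \<times> A. F \<sigma> i)"
    by (rule sum.cartesian_product)
  also have "\<dots> = (\<Sum>(\<tau>, i)\<in>?S \<times> A. F \<tau> (\<tau> j))"
    using assms(1) by (rule_tac sum.reindex_bij_witness[where i=swap and j=swap]) (auto simp: swap_S swap_def F)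
  also have "\<dots> = real (card A) * (\<Sum>\<sigma>\<in>?S. F \<sigma> (\<sigma> j))"
    by (simp add: sum.cartesian_product[symmetric] sum_distrib_left)
  finally show ?thesis ..
qed

lemma sum_PiE_recommend_bound_le:
  assumes "2 \<le> n" "j < k" "0 \<le> \<Delta> j" "\<Delta> j \<le> 1/4" "0 \<le> m"
    and kl: "17 * kl_half (\<Delta> j) * (m + 1) \<le> real n / 16"
  shows "(\<Sum>\<sigma>\<in>PiE {..<k} (\<lambda>_. {..<n}). recommend_bound \<pi> T \<Delta> \<sigma> j m (\<sigma> j))
    \<le> real (card (PiE {..<k} (\<lambda>_. {..<n}))) * (9/16)"
proof -
  let ?S = "PiE {..<k} (\<lambda>_. {..<n})"
  have "real n * (\<Sum>\<sigma>\<in>?S. recommend_bound \<pi> T \<Delta> \<sigma> j m (\<sigma> j))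
      = (\<Sum>\<sigma>\<in>?S. \<Sum>i<n. recommend_bound \<pi> T \<Delta> \<sigma> j m i)"
    using sum_PiE_eval_eq[of j "{..<k}" "{..<n}" "\<lambda>\<sigma> i. recommend_bound \<pi> T \<Delta> \<sigma> j m i"] \<open>j < k\<close>
    by (simp add: recommend_bound_update_best)
  also have "\<dots> \<le> (\<Sum>\<sigma>\<in>?S. 1 + real n / 16)"
  proof (rule sum_mono)
    fix \<sigma>
    show "(\<Sum>i<n. recommend_bound \<pi> T \<Delta> \<sigma> j m i) \<le> 1 + real n / 16"
      using sum_recommend_bound_le[where \<Delta>=\<Delta> and j=j and \<sigma>=\<sigma> and \<pi>=\<pi> and T=T and n=n, OF assms(3-5)] kl by linarith
  qed
  also have "\<dots> = real (card ?S) * (1 + real n / 16)"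
    by simp
  also have "\<dots> \<le> real (card ?S) * (real n * (9/16))"
    using \<open>2 \<le> n\<close> by (intro mult_left_mono) auto
  finally have "real n * (\<Sum>\<sigma>\<in>?S. recommend_bound \<pi> T \<Delta> \<sigma> j m (\<sigma> j))
      \<le> real n * (real (card ?S) * (9/16))"
    by (simp add: mult_ac)
  then show ?thesis
    using \<open>2 \<le> n\<close> by simp
qed

lemma simple_regret_hard_instance_ge:
  assumes \<Delta>: "\<And>c. 0 \<le> \<Delta> c" "\<And>c. \<Delta> c \<le> 1/4" and m: "\<And>j. j < k \<Longrightarrow> 0 < m j"
    and \<sigma>: "\<And>j. j < k \<Longrightarrow> \<sigma> j < n" and p: "\<And>j. j < k \<Longrightarrow> 0 \<le> p j"
    and \<gamma>: "\<And>j. j < k \<Longrightarrow> p j * \<Delta> j / m j = \<gamma>" "0 \<le> \<gamma>"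
  shows "(\<Sum>j<k. p j * \<Delta> j * (15/16 - recommend_bound \<pi> T \<Delta> \<sigma> j (m j) (\<sigma> j))) - \<gamma> * real T
    \<le> simple_regret n k \<pi> T (hard_instance \<Delta> \<sigma>) p"
proof -
  let ?P = "history \<pi> (hard_instance \<Delta> \<sigma>) T"
  have int_count: "integrable ?P (\<lambda>h. real (ctx_count j h))" for j
    unfolding history_eq_adaptive_history
    by (rule integrable_adaptive_history[where B="real T"]) (metis abs_of_nat of_nat_mono ctx_count_le_length)
  have "(\<Sum>j<k. real (ctx_count j h)) \<le> real T" if "h \<in> set_pmf ?P" for h
    using sum_ctx_count_le[where k=k and h=h] length_adaptive_history[of h] that
    by (simp add: history_eq_adaptive_history)
  then have "(\<integral>h. (\<Sum>j<k. real (ctx_count j h)) \<partial>?P) \<le> real T"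
    using int_count by (intro measure_pmf.integral_le_const AE_pmfI) auto
  then have "\<gamma> * (\<Sum>j<k. \<integral>h. real (ctx_count j h) \<partial>?P) \<le> \<gamma> * real T"
    using \<gamma>(2) int_count by (simp add: Bochner_Integration.integral_sum mult_left_mono)
  have "p j * \<Delta> j * (15/16 - recommend_bound \<pi> T \<Delta> \<sigma> j (m j) (\<sigma> j)) - \<gamma> * (\<integral>h. real (ctx_count j h) \<partial>?P)
      \<le> p j * \<Delta> j * (1 - (\<integral>h. pmf (rec_rule \<pi> h j) (\<sigma> j) \<partial>?P))" if "j < k" for j
  proof -
    have "p j * \<Delta> j * (15/16 - recommend_bound \<pi> T \<Delta> \<sigma> j (m j) (\<sigma> j)) - \<gamma> * (\<integral>h. real (ctx_count j h) \<partial>?P)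
        = p j * \<Delta> j * (15/16 - recommend_bound \<pi> T \<Delta> \<sigma> j (m j) (\<sigma> j) - (\<integral>h. real (ctx_count j h) \<partial>?P) / m j)"
      using \<gamma>(1)[OF that] m[OF that] by (auto simp: field_simps)
    also have "\<dots> \<le> p j * \<Delta> j * (1 - (\<integral>h. pmf (rec_rule \<pi> h j) (\<sigma> j) \<partial>?P))"
      using recommend_prob_le[where \<Delta>=\<Delta> and \<pi>=\<pi> and j=j and \<sigma>=\<sigma> and T=T, OF \<Delta> m[OF that]] p[OF that] \<Delta>(1)[of j]
      by (intro mult_left_mono) auto
    finally show ?thesis .
  qed
  then have "(\<Sum>j<k. p j * \<Delta> j * (15/16 - recommend_bound \<pi> T \<Delta> \<sigma> j (m j) (\<sigma> j))
      - \<gamma> * (\<integral>h. real (ctx_count j h) \<partial>?P))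
      \<le> (\<Sum>j<k. p j * \<Delta> j * (1 - (\<integral>h. pmf (rec_rule \<pi> h j) (\<sigma> j) \<partial>?P)))"
    by (intro sum_mono) auto
  also have "\<dots> = simple_regret n k \<pi> T (hard_instance \<Delta> \<sigma>) p"
  proof (intro simple_regret_hard_instance[symmetric] \<sigma>)
    show "\<Delta> c \<le> 1/2" for c
      using \<Delta>(2)[of c] by linarith
  qed (use \<Delta> in auto)
  finally show ?thesis
    using \<open>\<gamma> * (\<Sum>j<k. \<integral>h. real (ctx_count j h) \<partial>?P) \<le> \<gamma> * real T\<close>
    by (simp add: sum_subtractf sum_distrib_left)
qed

lemma kl_half_condition:
  assumes "0 \<le> d" "d \<le> 1/4" "1 \<le> m" "2176 * d\<^sup>2 * m \<le> x"
  shows "17 * kl_half d * (m + 1) \<le> x / 16"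
proof -
  have "17 * kl_half d * (m + 1) \<le> 17 * (4 * d\<^sup>2) * (2 * m)"
    using kl_half_le[OF assms(1,2)] kl_half_nonneg[OF assms(1,2)] assms(3)
    by (intro mult_mono) auto
  also have "\<dots> = 2176 * d\<^sup>2 * m / 16"
    by simp
  also have "\<dots> \<le> x / 16"
    using assms(4) by (simp add: mult_ac)
  finally show ?thesis .
qed

lemma worst_simple_regret_ge_gaps:
  assumes "2 \<le> n" and \<Delta>: "\<And>c. 0 \<le> \<Delta> c" "\<And>c. \<Delta> c \<le> 1/4"
    and m: "\<And>j. j < k \<Longrightarrow> 1 \<le> m j" "\<And>j. j < k \<Longrightarrow> 2176 * (\<Delta> j)\<^sup>2 * m j \<le> real n"
    and p: "\<And>j. j < k \<Longrightarrow> 0 \<le> p j"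
    and \<gamma>: "\<And>j. j < k \<Longrightarrow> p j * \<Delta> j / m j = \<gamma>" "0 \<le> \<gamma>"
  shows "3/8 * (\<Sum>j<k. p j * \<Delta> j) - \<gamma> * real T \<le> worst_simple_regret n k \<pi> T p"
proof -
  define S where "S = PiE {..<k} (\<lambda>_::nat. {..<n})"
  define regret where "regret = (\<lambda>\<sigma>. simple_regret n k \<pi> T (hard_instance \<Delta> \<sigma>) p)"
  define F where "F = (\<lambda>\<sigma> j. recommend_bound \<pi> T \<Delta> \<sigma> j (m j) (\<sigma> j))"
  define A where "A = (\<Sum>j<k. p j * \<Delta> j)"
  have "finite S" "S \<noteq> {}"
    using \<open>2 \<le> n\<close> by (auto simp: S_def PiE_eq_empty_iff finite_PiE lessThan_empty_iff)
  have lower: "15/16 * A - (\<Sum>j<k. p j * \<Delta> j * F \<sigma> j) - \<gamma> * real T \<le> regret \<sigma>" if "\<sigma> \<in> S" for \<sigma>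
  proof -
    have "(\<Sum>j<k. p j * \<Delta> j * (15/16 - F \<sigma> j)) = 15/16 * A - (\<Sum>j<k. p j * \<Delta> j * F \<sigma> j)"
      unfolding A_def right_diff_distrib sum_subtractf sum_distrib_left by (simp add: mult_ac)
    moreover have "(\<Sum>j<k. p j * \<Delta> j * (15/16 - F \<sigma> j)) - \<gamma> * real T \<le> regret \<sigma>"
      unfolding regret_def F_def
    proof (rule simple_regret_hard_instance_ge)
      show "0 < m j" if "j < k" for j
        using m(1)[OF that] by linarith
    qed (use \<Delta> p \<gamma> \<open>\<sigma> \<in> S\<close> in \<open>auto simp: S_def PiE_iff\<close>)
    ultimately show ?thesis
      by simp
  qed
  have "(\<Sum>\<sigma>\<in>S. \<Sum>j<k. p j * \<Delta> j * F \<sigma> j) = (\<Sum>j<k. p j * \<Delta> j * (\<Sum>\<sigma>\<in>S. F \<sigma> j))"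
    unfolding sum_distrib_left by (rule sum.swap)
  also have "\<dots> \<le> (\<Sum>j<k. p j * \<Delta> j * (real (card S) * (9/16)))"
  proof (intro sum_mono mult_left_mono)
    fix j
    assume "j \<in> {..<k}"
    then have "j < k"
      by simp
    have "17 * kl_half (\<Delta> j) * (m j + 1) \<le> real n / 16"
      using \<Delta> m \<open>j < k\<close> by (intro kl_half_condition) auto
    then show "(\<Sum>\<sigma>\<in>S. F \<sigma> j) \<le> real (card S) * (9/16)"
      unfolding S_def F_def using \<open>j < k\<close> \<Delta> m(1)[OF \<open>j < k\<close>]
      by (intro sum_PiE_recommend_bound_le[OF \<open>2 \<le> n\<close>]) auto
    show "0 \<le> p j * \<Delta> j"
      using p[OF \<open>j < k\<close>] \<Delta>(1)[of j] by simp
  qed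
  also have "\<dots> = real (card S) * (9/16) * A"
    by (simp add: A_def sum_distrib_left mult_ac)
  finally have G: "(\<Sum>\<sigma>\<in>S. \<Sum>j<k. p j * \<Delta> j * F \<sigma> j) \<le> real (card S) * (9/16) * A" .
  have "real (card S) * (3/8 * A - \<gamma> * real T) =
      real (card S) * (15/16 * A - \<gamma> * real T) - real (card S) * (9/16) * A"
    by (simp add: algebra_simps)
  also have "\<dots> \<le> real (card S) * (15/16 * A - \<gamma> * real T) - (\<Sum>\<sigma>\<in>S. \<Sum>j<k. p j * \<Delta> j * F \<sigma> j)"
    using G by linarith
  also have "\<dots> = (\<Sum>\<sigma>\<in>S. 15/16 * A - (\<Sum>j<k. p j * \<Delta> j * F \<sigma> j) - \<gamma> * real T)"
    by (simp add: sum_subtractf right_diff_distrib)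
  also have "\<dots> \<le> sum regret S"
    using lower by (rule sum_mono)
  also have "\<dots> \<le> real (card S) * Max (regret ` S)"
    using \<open>finite S\<close> by (intro sum_bounded_above Max_ge) auto
  finally have avg: "3/8 * A - \<gamma> * real T \<le> Max (regret ` S)"
    using \<open>finite S\<close> \<open>S \<noteq> {}\<close> by (simp add: card_gt_0_iff)
  have "Max (regret ` S) \<in> regret ` S"
    using \<open>finite S\<close> \<open>S \<noteq> {}\<close> by (intro Max_in) auto
  then obtain \<sigma> where "\<sigma> \<in> S" "Max (regret ` S) = regret \<sigma>"
    by blast
  moreover have "regret \<sigma> \<le> worst_simple_regret n k \<pi> T p"
    unfolding regret_def using \<open>2 \<le> n\<close> p
    by (intro simple_regret_le_worst_simple_regret valid_instance_hard_instance) auto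
  ultimately show ?thesis
    using avg unfolding A_def by linarith
qed

section \<open>Choice of the gaps\<close>

lemma norm_two_thirds_eq:
  "norm_two_thirds k p = (\<Sum>j<k. p j powr (2/3)) * sqrt (\<Sum>j<k. p j powr (2/3))"
proof -
  define S where "S = (\<Sum>j<k. p j powr (2/3))"
  have "0 \<le> S"
    by (simp add: S_def sum_nonneg)
  have "S powr (3/2) = S powr 1 * S powr (1/2)"
    by (subst powr_add[symmetric]) simp
  also have "\<dots> = S * sqrt S"
    using \<open>0 \<le> S\<close> by (simp add: powr_half_sqrt)
  finally show ?thesis
    by (simp add: norm_two_thirds_def S_def)
qed

lemma Min_mult_sum_powr_le:
  fixes p :: "nat \<Rightarrow> real"
  assumes p: "\<And>j. j < k \<Longrightarrow> 0 < p j" and sum_p: "(\<Sum>j<k. p j) = 1" and "j < k"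
  shows "Min (p ` {..<k}) * (\<Sum>i<k. p i powr (2/3)) \<le> p j powr (2/3)"
proof -
  define \<mu> where "\<mu> = Min (p ` {..<k})"
  have "\<mu> \<in> p ` {..<k}"
    unfolding \<mu>_def using \<open>j < k\<close> by (intro Min_in) auto
  then have "0 < \<mu>"
    using p by auto
  have \<mu>_le: "\<mu> \<le> p i" if "i < k" for i
    unfolding \<mu>_def using that by (intro Min_le) auto
  have "p i powr (2/3) = p i * p i powr (-1/3)" if "i < k" for i
  proof -
    have "p i powr (2/3) = p i powr 1 * p i powr (-1/3)"
      by (subst powr_add[symmetric]) simp
    then show ?thesis
      using p[OF that] by simp
  qed
  then have "(\<Sum>i<k. p i powr (2/3)) = (\<Sum>i<k. p i * p i powr (-1/3))"
    by (intro sum.cong) auto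
  also have "\<dots> \<le> (\<Sum>i<k. p i * \<mu> powr (-1/3))"
    using p \<mu>_le \<open>0 < \<mu>\<close> by (intro sum_mono mult_left_mono powr_mono2') (auto intro: less_imp_le)
  also have "\<dots> = \<mu> powr (-1/3)"
    using sum_p by (simp add: sum_distrib_right[symmetric])
  finally have "\<mu> * (\<Sum>i<k. p i powr (2/3)) \<le> \<mu> * \<mu> powr (-1/3)"
    using \<open>0 < \<mu>\<close> by simp
  also have "\<dots> = \<mu> powr (2/3)"
    using \<open>0 < \<mu>\<close> powr_add[of \<mu> 1 "-1/3"] by simp
  also have "\<dots> \<le> p j powr (2/3)"
    using \<mu>_le[OF \<open>j < k\<close>] \<open>0 < \<mu>\<close> by (intro powr_mono2) auto
  finally show ?thesis
    unfolding \<mu>_def .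
qed

text \<open>With \<open>q\<^sub>j\<^sup>3 = p\<^sub>j\<close>, the gaps \<open>\<Delta>\<^sub>j = b / q\<^sub>j\<close> and sampling budgets \<open>m\<^sub>j = 8 T q\<^sub>j\<^sup>2 / S\<close> make
  \<open>p\<^sub>j \<Delta>\<^sub>j / m\<^sub>j\<close> independent of \<open>j\<close>, and the scale \<open>b\<close> is chosen so that \<open>2176 \<Delta>\<^sub>j\<^sup>2 m\<^sub>j = n\<close>.\<close>

lemma worst_simple_regret_ge_cube_root_gaps:
  assumes "2 \<le> n" "0 < T"
    and q: "\<And>j. j < k \<Longrightarrow> 0 < q j" "\<And>j. j < k \<Longrightarrow> p j = q j ^ 3"
    and S: "S = (\<Sum>j<k. (q j)\<^sup>2)" "0 < S"
    and budget: "\<And>j. j < k \<Longrightarrow> real n * S \<le> real T * (q j)\<^sup>2"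
  shows "sqrt (real n * S / (17408 * real T)) * S / 4 \<le> worst_simple_regret n k \<pi> T p"
proof -
  define b where "b = sqrt (real n * S / (17408 * real T))"
  define \<Delta> where "\<Delta> = (\<lambda>c. if c < k then b / q c else 0)"
  define m where "m = (\<lambda>j. 8 * real T * (q j)\<^sup>2 / S)"
  define \<gamma> where "\<gamma> = b * S / (8 * real T)"
  have "0 \<le> S" "0 \<le> b"
    using \<open>0 < S\<close> by (simp_all add: b_def)
  have "0 \<le> real n * S / (17408 * real T)"
    using \<open>0 \<le> S\<close> by simp
  then have b2: "b\<^sup>2 = real n * S / (17408 * real T)"
    by (simp add: b_def)
  have \<Delta>_le: "\<Delta> c \<le> 1/4" for c
  proof (cases "c < k")
    case True
    have "b\<^sup>2 \<le> real T * (q c)\<^sup>2 / (17408 * real T)"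
      unfolding b2 using budget[OF True] \<open>0 < T\<close> by (intro divide_right_mono) auto
    also have "\<dots> = (q c)\<^sup>2 / 17408"
      using \<open>0 < T\<close> by simp
    also have "\<dots> \<le> (q c / 4)\<^sup>2"
      unfolding power_divide by (intro divide_left_mono) auto
    finally have "b\<^sup>2 \<le> (q c / 4)\<^sup>2" .
    then have "b \<le> q c / 4"
      using q(1)[OF True] \<open>0 \<le> b\<close> by (simp add: power2_le_iff_abs_le)
    then show ?thesis
      using True q(1)[OF True] by (simp add: \<Delta>_def divide_le_eq mult.commute)
  qed (simp add: \<Delta>_def)
  have \<Delta>_nonneg: "0 \<le> \<Delta> c" for c
    using q(1) \<open>0 \<le> b\<close> by (auto simp: \<Delta>_def intro!: divide_nonneg_pos)
  have m_ge: "1 \<le> m j" if "j < k" for j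
  proof -
    have "S \<le> real n * S"
      using \<open>2 \<le> n\<close> \<open>0 < S\<close> by (simp add: mult_le_cancel_right1)
    moreover have "0 \<le> real T * (q j)\<^sup>2"
      by simp
    ultimately have "S \<le> 8 * real T * (q j)\<^sup>2"
      using budget[OF that] by linarith
    then show ?thesis
      using \<open>0 < S\<close> by (simp add: m_def le_divide_eq)
  qed
  have "3/8 * (\<Sum>j<k. p j * \<Delta> j) - \<gamma> * real T \<le> worst_simple_regret n k \<pi> T p"
  proof (rule worst_simple_regret_ge_gaps[OF \<open>2 \<le> n\<close> \<Delta>_nonneg \<Delta>_le m_ge])
    show "2176 * (\<Delta> j)\<^sup>2 * m j \<le> real n" if "j < k" for j
      using that q(1)[OF that] \<open>0 < S\<close> \<open>0 < T\<close> by (simp add: \<Delta>_def m_def b2 power_divide field_simps)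
    show "p j * \<Delta> j / m j = \<gamma>" if "j < k" for j
      using that q[OF that] \<open>0 < S\<close> \<open>0 < T\<close>
      by (simp add: \<Delta>_def m_def \<gamma>_def field_simps power2_eq_square power3_eq_cube)
    show "0 \<le> p j" if "j < k" for j
      using q[OF that] by simp
    show "0 \<le> \<gamma>"
      using \<open>0 \<le> b\<close> \<open>0 < S\<close> by (simp add: \<gamma>_def)
  qed
  moreover have "(\<Sum>j<k. p j * \<Delta> j) = b * S"
    unfolding S(1) sum_distrib_left using q by (intro sum.cong refl) (simp add: \<Delta>_def power2_eq_square power3_eq_cube)
  ultimately show ?thesis
    unfolding b_def[symmetric] using \<open>0 < T\<close> by (simp add: \<gamma>_def mult_ac)
qed

theorem worst_simple_regret_lower_bound:
  assumes "2 \<le> n" "1 \<le> k" and p: "\<forall>j<k. 0 < p j" "(\<Sum>j<k. p j) = 1"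
    and T: "real n / Min (p ` {..<k}) \<le> real T"
  shows "1/600 * sqrt (real n / real T) * norm_two_thirds k p \<le> worst_simple_regret n k \<pi> T p"
proof -
  define \<mu> where "\<mu> = Min (p ` {..<k})"
  define q where "q = (\<lambda>j. p j powr (1/3))"
  define S where "S = (\<Sum>j<k. p j powr (2/3))"
  define b where "b = sqrt (real n * S / (17408 * real T))"
  have "\<mu> \<in> p ` {..<k}"
    unfolding \<mu>_def using \<open>1 \<le> k\<close> by (intro Min_in) (auto simp: lessThan_empty_iff)
  then have "0 < \<mu>"
    using p(1) by auto
  then have nT: "real n \<le> real T * \<mu>"
    using T by (simp add: \<mu>_def divide_le_eq)
  have "0 < real n / \<mu>"
    using \<open>2 \<le> n\<close> \<open>0 < \<mu>\<close> by simp
  then have "0 < T"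
    using T unfolding \<mu>_def by linarith
  have q2: "(q j)\<^sup>2 = p j powr (2/3)" if "j < k" for j
    using p(1) that by (simp add: q_def power2_eq_square powr_add[symmetric])
  have q3: "p j = (q j) ^ 3" if "j < k" for j
    using p(1) that by (simp add: q_def power3_eq_cube powr_add[symmetric] abs_of_pos)
  have "0 < S"
    unfolding S_def using p(1) \<open>1 \<le> k\<close> by (intro sum_pos) (auto simp: lessThan_empty_iff)
  have budget: "real n * S \<le> real T * (q j)\<^sup>2" if "j < k" for j
  proof -
    have "real n * S \<le> real T * \<mu> * S"
      using nT \<open>0 < S\<close> by (intro mult_right_mono) auto
    also have "\<dots> = real T * (\<mu> * S)"
      by (rule mult.assoc)
    also have "\<mu> * S \<le> (q j)\<^sup>2"
      unfolding \<mu>_def S_def q2[OF that] by (rule Min_mult_sum_powr_le) (use p that in auto)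
    finally show ?thesis
      by (simp add: mult_left_mono)
  qed
  have "S = (\<Sum>j<k. (q j)\<^sup>2)"
    unfolding S_def by (intro sum.cong) (simp_all add: q2)
  moreover have "0 < q j" if "j < k" for j
    using p(1) that by (simp add: q_def less_imp_neq[symmetric])
  ultimately have "b * S / 4 \<le> worst_simple_regret n k \<pi> T p"
    unfolding b_def using \<open>2 \<le> n\<close> \<open>0 < T\<close> q3 \<open>0 < S\<close> budget
    by (intro worst_simple_regret_ge_cube_root_gaps[where q=q]) auto
  moreover have "1/600 * sqrt (real n / real T) * norm_two_thirds k p \<le> b * S / 4"
  proof -
    have "sqrt 17408 \<le> (150::real)"
      by (rule real_le_lsqrt) auto
    have b: "b = sqrt (real n / real T) * sqrt S / sqrt 17408"
      unfolding b_def by (simp add: real_sqrt_mult real_sqrt_divide field_simps)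
    have "1/600 * sqrt (real n / real T) * norm_two_thirds k p = sqrt (real n / real T) * sqrt S * S / 600"
      by (simp add: norm_two_thirds_eq S_def[symmetric])
    also have "\<dots> \<le> sqrt (real n / real T) * sqrt S * S / (4 * sqrt 17408)"
      using \<open>sqrt 17408 \<le> 150\<close> \<open>0 < S\<close> by (intro divide_left_mono) auto
    also have "\<dots> = b * S / 4"
      unfolding b by simp
    finally show ?thesis .
  qed
  ultimately show ?thesis
    by linarith
qed

theorem lemma2:
  shows "\<exists>c > 0. \<exists>C > 0. \<forall>(n::nat) (k::nat) (T::nat) (p::nat \<Rightarrow> real) (\<pi>::policy).
     n \<ge> 2 \<longrightarrow> k \<ge> 1 \<longrightarrow> (\<forall>j<k. p j > 0) \<longrightarrow> (\<Sum>j<k. p j) = 1 \<longrightarrow>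
     valid_policy n k \<pi> \<longrightarrow>
     real T \<ge> C * real n / Min (p ` {..<k}) \<longrightarrow>
     worst_simple_regret n k \<pi> T p \<ge> c * sqrt (real n / real T) * norm_two_thirds k p"
proof (rule exI[of _ "1/600"], intro conjI exI[of _ 1] allI impI)
  fix n k T :: nat and p :: "nat \<Rightarrow> real" and \<pi> :: policy
  assume "n \<ge> 2" "k \<ge> 1" "\<forall>j<k. p j > 0" "(\<Sum>j<k. p j) = 1" "valid_policy n k \<pi>"
    and "real T \<ge> 1 * real n / Min (p ` {..<k})"
  then show "worst_simple_regret n k \<pi> T p \<ge> 1/600 * sqrt (real n / real T) * norm_two_thirds k p"
    by (intro worst_simple_regret_lower_bound) auto
qed simp_all

end
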